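(* Let $g(t)$, $t\in[0,T)$, be a solution of the Ricci flow $\partial_t g_{ij}=-2R_{ij}$ on an $n$-manifold $M$, let $\tau\in[0,T)$, and let $\tilde g_\tau$ and $\tilde\nabla_\tau$ be the degenerate cometric and connection on $\tilde M_\tau=M\times[0,T-\tau)$ described in the context. Then the pair $(\tilde g_\tau,\tilde\nabla_\tau)$ is a solution to the Ricci flow for degenerate metrics, i.e. for all $0\le i,j,k\le n$, $$\frac{\partial}{\partial t}\tilde g^{ij}=2\sum_{k,l=0}^n\tilde g^{ik}\tilde g^{jl}\tilde R_{kl},\qquad \frac{\partial}{\partial t}\tilde\Gamma_{ij}^k=-\sum_{l=0}^n\tilde g^{kl}\big(\tilde\nabla_i\tilde R_{jl}+\tilde\nabla_j\tilde R_{il}-\tilde\nabla_l\tilde R_{ij}\big).$$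
   Context: Conventions for a metric $g$ on $M$ with Christoffel symbols $\Gamma_{ij}^k$: $R_{ijk}^l=\partial_i\Gamma_{jk}^l-\partial_j\Gamma_{ik}^l+\Gamma_{jk}^m\Gamma_{im}^l-\Gamma_{ik}^m\Gamma_{jm}^l$, $R_{ijkl}=g_{lm}R_{ijk}^m$, $R_{jk}=R_{pjk}^p$, $R=g^{jk}R_{jk}$; indices are raised with $g^{-1}$ and repeated indices are summed. Use local coordinates $x^1,\dots,x^n$ on $M$ and $x^0=t$ on the time factor of $\tilde M_\tau=M\times[0,T-\tau)$. The degenerate metric $\tilde g_\tau$ on the cotangent bundle of $\tilde M_\tau$ is $\tilde g^{ij}(x,t)=g^{ij}(x,t+\tau)$ for $1\le i,j\le n$ and $\tilde g^{ij}=0$ if $i=0$ or $j=0$. The connection $\tilde\nabla_\tau$ on $T\tilde M_\tau$ has Christoffel symbols (left sides at $(x,t)$, right sides computed from $g$ at $(x,t+\tau)$): $\tilde\Gamma_{ij}^k=\Gamma_{ij}^k$ for $1\le i,j,k\le n$; $\tilde\Gamma_{ij}^0=0$ for $0\le i,j\le n$; $\tilde\Gamma_{i0}^k=\tilde\Gamma_{0i}^k=-R_i^k$ for $1\le i,k\le n$; $\tilde\Gamma_{00}^k=-\tfrac12\nabla^kR$ for $1\le k\le n$. Its curvature is $\tilde R_{ijk}^l=\partial_i\tilde\Gamma_{jk}^l-\partial_j\tilde\Gamma_{ik}^l+\sum_{m=0}^n(\tilde\Gamma_{jk}^m\tilde\Gamma_{im}^l-\tilde\Gamma_{ik}^m\tilde\Gamma_{jm}^l)$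 with all indices in $\{0,\dots,n\}$ and $\partial_0=\partial_t$, and its Ricci tensor is $\tilde R_{jk}=\sum_{p=0}^n\tilde R_{pjk}^p$. $\tilde\nabla_i\tilde R_{jl}$ denotes the covariant derivative of this $(0,2)$-tensor with respect to $\tilde\nabla_\tau$. *)

theory Defs
  imports "HOL-Analysis.Analysis"
begin

text \<open>The spatial index type 'n has CARD('n) = n elements; for the extended space
  M x [0,T-tau) the index type is 'n option, with None playing the role of index 0 (time).\<close>

type_synonym 'n pt = "(real^'n) \<times> real"

definition dirderiv :: "'a::real_normed_vector \<Rightarrow> ('a \<Rightarrow> real) \<Rightarrow> 'a \<Rightarrow> real" where
  "dirderiv v f p = frechet_derivative f (at p) v"

definition smooth_on :: "'a::real_normed_vector set \<Rightarrow> ('a \<Rightarrow> real) \<Rightarrow> bool" where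
  "smooth_on S f \<longleftrightarrow> open S \<and>
     (\<forall>vs p. p \<in> S \<longrightarrow> (foldr dirderiv vs f) differentiable (at p))"

definition dx :: "'n::finite \<Rightarrow> ('n pt \<Rightarrow> real) \<Rightarrow> 'n pt \<Rightarrow> real" where
  "dx i f p = dirderiv (axis i 1, 0) f p"

definition dt :: "('n::finite pt \<Rightarrow> real) \<Rightarrow> 'n pt \<Rightarrow> real" where
  "dt f p = dirderiv (0, 1) f p"

definition dtil :: "'n::finite option \<Rightarrow> ('n pt \<Rightarrow> real) \<Rightarrow> 'n pt \<Rightarrow> real" where
  "dtil a f p = (case a of None \<Rightarrow> dt f p | Some i \<Rightarrow> dx i f p)"

text \<open>Generic curvature, Ricci tensor and covariant derivative of a (0,2)-tensor,
  for a connection with Christoffel symbols C i j k (= Gamma_ij^k) and coordinate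
  partial derivative operator D, following the conventions of the context.\<close>
definition curv :: "('i::finite \<Rightarrow> ('p \<Rightarrow> real) \<Rightarrow> 'p \<Rightarrow> real) \<Rightarrow> ('i \<Rightarrow> 'i \<Rightarrow> 'i \<Rightarrow> 'p \<Rightarrow> real)
    \<Rightarrow> 'i \<Rightarrow> 'i \<Rightarrow> 'i \<Rightarrow> 'i \<Rightarrow> 'p \<Rightarrow> real" where
  "curv D C i j k l p = D i (C j k l) p - D j (C i k l) p
     + (\<Sum>m\<in>UNIV. C j k m p * C i m l p - C i k m p * C j m l p)"

definition ricci :: "('i::finite \<Rightarrow> ('p \<Rightarrow> real) \<Rightarrow> 'p \<Rightarrow> real) \<Rightarrow> ('i \<Rightarrow> 'i \<Rightarrow> 'i \<Rightarrow> 'p \<Rightarrow> real)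
    \<Rightarrow> 'i \<Rightarrow> 'i \<Rightarrow> 'p \<Rightarrow> real" where
  "ricci D C j k p = (\<Sum>q\<in>UNIV. curv D C q j k q p)"

definition covd2 :: "('i::finite \<Rightarrow> ('p \<Rightarrow> real) \<Rightarrow> 'p \<Rightarrow> real) \<Rightarrow> ('i \<Rightarrow> 'i \<Rightarrow> 'i \<Rightarrow> 'p \<Rightarrow> real)
    \<Rightarrow> ('i \<Rightarrow> 'i \<Rightarrow> 'p \<Rightarrow> real) \<Rightarrow> 'i \<Rightarrow> 'i \<Rightarrow> 'i \<Rightarrow> 'p \<Rightarrow> real" where
  "covd2 D C S i j l p = D i (S j l) p
     - (\<Sum>m\<in>UNIV. C i j m p * S m l p) - (\<Sum>m\<in>UNIV. C i l m p * S j m p)"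

definition gmat :: "('n::finite \<Rightarrow> 'n \<Rightarrow> 'n pt \<Rightarrow> real) \<Rightarrow> 'n pt \<Rightarrow> real^'n^'n" where
  "gmat g p = (\<chi> i j. g i j p)"

definition ginv :: "('n::finite \<Rightarrow> 'n \<Rightarrow> 'n pt \<Rightarrow> real) \<Rightarrow> 'n \<Rightarrow> 'n \<Rightarrow> 'n pt \<Rightarrow> real" where
  "ginv g i j p = matrix_inv (gmat g p) $ i $ j"

definition christoffel :: "('n::finite \<Rightarrow> 'n \<Rightarrow> 'n pt \<Rightarrow> real) \<Rightarrow> 'n \<Rightarrow> 'n \<Rightarrow> 'n \<Rightarrow> 'n pt \<Rightarrow> real" where
  "christoffel g i j k p = (1/2) * (\<Sum>l\<in>UNIV. ginv g k l p *
      (dx i (g j l) p + dx j (g i l) p - dx l (g i j) p))"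

definition Ric :: "('n::finite \<Rightarrow> 'n \<Rightarrow> 'n pt \<Rightarrow> real) \<Rightarrow> 'n \<Rightarrow> 'n \<Rightarrow> 'n pt \<Rightarrow> real" where
  "Ric g = ricci dx (christoffel g)"

definition Ric_up :: "('n::finite \<Rightarrow> 'n \<Rightarrow> 'n pt \<Rightarrow> real) \<Rightarrow> 'n \<Rightarrow> 'n \<Rightarrow> 'n pt \<Rightarrow> real" where
  "Ric_up g i k p = (\<Sum>j\<in>UNIV. ginv g k j p * Ric g i j p)"

definition scal :: "('n::finite \<Rightarrow> 'n \<Rightarrow> 'n pt \<Rightarrow> real) \<Rightarrow> 'n pt \<Rightarrow> real" where
  "scal g p = (\<Sum>j\<in>UNIV. \<Sum>k\<in>UNIV. ginv g j k p * Ric g j k p)"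

definition grad_scal :: "('n::finite \<Rightarrow> 'n \<Rightarrow> 'n pt \<Rightarrow> real) \<Rightarrow> 'n \<Rightarrow> 'n pt \<Rightarrow> real" where
  "grad_scal g k p = (\<Sum>l\<in>UNIV. ginv g k l p * dx l (scal g) p)"

definition gtil :: "('n::finite \<Rightarrow> 'n \<Rightarrow> 'n pt \<Rightarrow> real) \<Rightarrow> real
    \<Rightarrow> 'n option \<Rightarrow> 'n option \<Rightarrow> 'n pt \<Rightarrow> real" where
  "gtil g \<tau> a b p = (case (a, b) of
      (Some i, Some j) \<Rightarrow> ginv g i j (fst p, snd p + \<tau>)
    | _ \<Rightarrow> 0)"

definition Gtil :: "('n::finite \<Rightarrow> 'n \<Rightarrow> 'n pt \<Rightarrow> real) \<Rightarrow> real
    \<Rightarrow> 'n option \<Rightarrow> 'n option \<Rightarrow> 'n option \<Rightarrow> 'n pt \<Rightarrow> real" where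
  "Gtil g \<tau> a b c p = (let q = (fst p, snd p + \<tau>) in
     case (a, b, c) of
       (_, _, None) \<Rightarrow> 0
     | (Some i, Some j, Some k) \<Rightarrow> christoffel g i j k q
     | (Some i, None, Some k) \<Rightarrow> - Ric_up g i k q
     | (None, Some i, Some k) \<Rightarrow> - Ric_up g i k q
     | (None, None, Some k) \<Rightarrow> - (1/2) * grad_scal g k q)"

definition Rictil :: "('n::finite \<Rightarrow> 'n \<Rightarrow> 'n pt \<Rightarrow> real) \<Rightarrow> real
    \<Rightarrow> 'n option \<Rightarrow> 'n option \<Rightarrow> 'n pt \<Rightarrow> real" where
  "Rictil g \<tau> = ricci dtil (Gtil g \<tau>)"

definition ricci_flow_on :: "(real^'n::finite) set \<Rightarrow> real \<Rightarrow> ('n \<Rightarrow> 'n \<Rightarrow> 'n pt \<Rightarrow> real) \<Rightarrow> bool" where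
  "ricci_flow_on U T g \<longleftrightarrow> open U \<and>
     (\<forall>i j. smooth_on (U \<times> {0<..<T}) (g i j)) \<and>
     (\<forall>i j p. p \<in> U \<times> {0<..<T} \<longrightarrow> g i j p = g j i p) \<and>
     (\<forall>p v. p \<in> U \<times> {0<..<T} \<longrightarrow> v \<noteq> 0 \<longrightarrow> v \<bullet> (gmat g p *v v) > 0) \<and>
     (\<forall>i j p. p \<in> U \<times> {0<..<T} \<longrightarrow> dt (g i j) p = -2 * Ric g i j p)"

end

theory Submission
  imports Defs
begin

text \<open>
  Computing the curvature of \<open>Gtil\<close> gives
  \<open>Rictil_ij = R_ij\<close>, \<open>Rictil_i0 = Rictil_0i = \<partial>_i R / 2\<close> and \<open>Rictil_00 = \<partial>_t R / 2\<close>: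
  the mixed components reduce to the contracted second Bianchi identity
  \<open>\<nabla>\<^sup>j R_ij = \<partial>_i R / 2\<close>, the time-time component to the evolution
  \<open>\<partial>_t R = \<Delta>R + 2|Ric|\<^sup>2\<close> under Ricci flow. With these values the evolution of \<open>gtil\<close> is
  \<open>\<partial>_t g\<^sup>i\<^sup>j = 2R\<^sup>i\<^sup>j\<close>, the evolution of the spatial Christoffel symbols is the classical
  variation formula \<open>\<partial>_t \<Gamma>\<^sup>k_ij = -g\<^sup>k\<^sup>l(\<nabla>_i R_jl + \<nabla>_j R_il - \<nabla>_l R_ij)\<close>,
  and the components with time indices follow from the evolution of \<open>R_i\<^sup>k\<close> and \<open>\<nabla>\<^sup>k R\<close>.
  Everything is computed for \<open>\<tau> = 0\<close>; a general \<open>\<tau>\<close> is a translation in time.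
\<close>

lemma dirderiv_cong_open:
  assumes "open S" "p \<in> S" "\<And>q. q \<in> S \<Longrightarrow> f q = h q"
  shows "dirderiv v f p = dirderiv v h p"
proof -
  have "(f has_derivative D) (at p) \<longleftrightarrow> (h has_derivative D) (at p)" for D
    using has_derivative_transform_within_open[of f D p UNIV S h]
      has_derivative_transform_within_open[of h D p UNIV S f] assms by auto
  then show ?thesis unfolding dirderiv_def frechet_derivative_def by simp
qed

lemma differentiable_cong_open:
  assumes "open S" "p \<in> S" "\<And>q. q \<in> S \<Longrightarrow> f q = h q" "f differentiable at p"
  shows "h differentiable at p"
  using has_derivative_transform_within_open[of f _ p UNIV S h] assms
  unfolding differentiable_def by blast

lemma dirderiv_shift: "dirderiv v (\<lambda>q. f (q + c)) p = dirderiv v f (p + c)"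
proof -
  have shift: "((\<lambda>q. k (q + d)) has_derivative D) (at x)" if "(k has_derivative D) (at (x + d))"
    for k :: "'a \<Rightarrow> 'b::real_normed_vector" and d x D
  proof -
    have "((\<lambda>q. q + d) has_derivative (\<lambda>q. q)) (at x)"
      by (intro derivative_eq_intros) auto
    from has_derivative_compose[OF this that] show ?thesis by simp
  qed
  have "((\<lambda>q. f (q + c)) has_derivative D) (at p) \<longleftrightarrow> (f has_derivative D) (at (p + c))" for D
  proof
    assume "((\<lambda>q. f (q + c)) has_derivative D) (at p)"
    from shift[of "\<lambda>q. f (q + c)" D "p + c" "- c", simplified, OF this]
    show "(f has_derivative D) (at (p + c))" by simp
  qed (rule shift)
  then show ?thesis unfolding dirderiv_def frechet_derivative_def by simp
qed

lemma dirderiv_const [simp]: "dirderiv v (\<lambda>q. c) p = 0"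
  unfolding dirderiv_def by simp

lemma dirderiv_add:
  assumes "f differentiable at p" "h differentiable at p"
  shows "dirderiv v (\<lambda>q. f q + h q) p = dirderiv v f p + dirderiv v h p"
  using frechet_derivative_at[OF has_derivative_add[OF assms[unfolded frechet_derivative_works]]]
  unfolding dirderiv_def by (metis (mono_tags, lifting))

lemma dirderiv_minus:
  assumes "f differentiable at p"
  shows "dirderiv v (\<lambda>q. - f q) p = - dirderiv v f p"
  using frechet_derivative_at[OF has_derivative_minus[OF assms[unfolded frechet_derivative_works]]]
  unfolding dirderiv_def by (metis (mono_tags, lifting))

lemma dirderiv_diff:
  assumes "f differentiable at p" "h differentiable at p"
  shows "dirderiv v (\<lambda>q. f q - h q) p = dirderiv v f p - dirderiv v h p"
  using frechet_derivative_at[OF has_derivative_diff[OF assms[unfolded frechet_derivative_works]]]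
  unfolding dirderiv_def by (metis (mono_tags, lifting))

lemma dirderiv_mult:
  fixes f h :: "'a::real_normed_vector \<Rightarrow> real"
  assumes "f differentiable at p" "h differentiable at p"
  shows "dirderiv v (\<lambda>q. f q * h q) p = dirderiv v f p * h p + f p * dirderiv v h p"
  using frechet_derivative_at[OF has_derivative_mult[OF assms[unfolded frechet_derivative_works]]]
  unfolding dirderiv_def by (metis (mono_tags, lifting) add.commute)

lemma dirderiv_cmult:
  fixes f :: "'a::real_normed_vector \<Rightarrow> real"
  assumes "f differentiable at p"
  shows "dirderiv v (\<lambda>q. c * f q) p = c * dirderiv v f p"
  using dirderiv_mult[OF differentiable_const assms, of v c] by simp

lemma dirderiv_sum:
  fixes f :: "'i \<Rightarrow> 'a::real_normed_vector \<Rightarrow> real"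
  assumes "finite A" "\<And>i. i \<in> A \<Longrightarrow> f i differentiable at p"
  shows "dirderiv v (\<lambda>q. \<Sum>i\<in>A. f i q) p = (\<Sum>i\<in>A. dirderiv v (f i) p)"
  using assms
proof (induction A rule: finite_induct)
  case (insert a A)
  have "(\<lambda>q. \<Sum>i\<in>A. f i q) differentiable at p"
    using insert by (intro differentiable_sum) auto
  then have "dirderiv v (\<lambda>q. f a q + (\<Sum>i\<in>A. f i q)) p
      = dirderiv v (f a) p + dirderiv v (\<lambda>q. \<Sum>i\<in>A. f i q) p"
    using insert by (intro dirderiv_add) auto
  then show ?case using insert by simp
qed simp

fun iter_differentiable_on :: "nat \<Rightarrow> 'a::real_normed_vector set \<Rightarrow> ('a \<Rightarrow> real) \<Rightarrow> bool" where
  "iter_differentiable_on 0 S f = (\<forall>p\<in>S. f differentiable at p)"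
| "iter_differentiable_on (Suc n) S f =
    ((\<forall>p\<in>S. f differentiable at p) \<and> (\<forall>v. iter_differentiable_on n S (dirderiv v f)))"

lemma iter_differentiable_on_iff:
  "iter_differentiable_on n S f \<longleftrightarrow>
    (\<forall>vs. length vs \<le> n \<longrightarrow> (\<forall>p\<in>S. foldr dirderiv vs f differentiable at p))"
proof (induction n arbitrary: f)
  case (Suc n)
  show ?case
  proof
    assume H: "iter_differentiable_on (Suc n) S f"
    show "\<forall>vs. length vs \<le> Suc n \<longrightarrow> (\<forall>p\<in>S. foldr dirderiv vs f differentiable at p)"
    proof (intro allI impI)
      fix vs :: "'a list" assume L: "length vs \<le> Suc n"
      show "\<forall>p\<in>S. foldr dirderiv vs f differentiable at p"
      proof (cases vs rule: rev_cases)
        case (snoc ws v)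
        then have "length ws \<le> n" using L by simp
        with H Suc.IH[of "dirderiv v f"] show ?thesis using snoc by simp
      qed (use H in simp)
    qed
  next
    assume H: "\<forall>vs. length vs \<le> Suc n \<longrightarrow> (\<forall>p\<in>S. foldr dirderiv vs f differentiable at p)"
    have "iter_differentiable_on n S (dirderiv v f)" for v
      unfolding Suc.IH using H[rule_format, of "_ @ [v]"] by simp
    moreover have "\<forall>p\<in>S. f differentiable at p" using H[rule_format, of "[]"] by simp
    ultimately show "iter_differentiable_on (Suc n) S f" by simp
  qed
qed simp

lemma smooth_on_iff_iter_differentiable_on:
  "smooth_on S f \<longleftrightarrow> open S \<and> (\<forall>n. iter_differentiable_on n S f)"
  unfolding smooth_on_def iter_differentiable_on_iff by auto

lemma iter_differentiable_on_imp_differentiable: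
  "iter_differentiable_on n S f \<Longrightarrow> p \<in> S \<Longrightarrow> f differentiable at p"
  by (cases n) auto

lemma iter_differentiable_on_Suc_imp:
  "iter_differentiable_on (Suc n) S f \<Longrightarrow> iter_differentiable_on n S f"
  by (induction n arbitrary: f) auto

lemma iter_differentiable_on_cong:
  assumes "open S" "\<And>q. q \<in> S \<Longrightarrow> f q = h q" "iter_differentiable_on n S f"
  shows "iter_differentiable_on n S h"
  using assms(2,3)
proof (induction n arbitrary: f h)
  case 0 then show ?case using differentiable_cong_open[OF assms(1) _ 0(1)] by auto
next
  case (Suc n)
  have "iter_differentiable_on n S (dirderiv v h)" for v
  proof -
    have "\<And>q. q \<in> S \<Longrightarrow> dirderiv v f q = dirderiv v h q"
      using dirderiv_cong_open[OF assms(1)] Suc.prems(1) by blast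
    then show ?thesis using Suc.IH[of "dirderiv v f" "dirderiv v h"] Suc.prems by auto
  qed
  moreover have "\<forall>p\<in>S. h differentiable at p"
    using Suc.prems differentiable_cong_open[OF assms(1) _ Suc.prems(1)] by auto
  ultimately show ?case by simp
qed

lemma iter_differentiable_on_const: "iter_differentiable_on n S (\<lambda>q. c)"
proof (induction n arbitrary: c)
  case (Suc n)
  have "dirderiv v (\<lambda>q::'a. c) = (\<lambda>q. 0)" for v by (rule ext) simp
  then show ?case using Suc[of 0] by simp
qed simp

lemma iter_differentiable_on_add:
  assumes "open S" "iter_differentiable_on n S f" "iter_differentiable_on n S h"
  shows "iter_differentiable_on n S (\<lambda>q. f q + h q)"
  using assms(2,3)
proof (induction n arbitrary: f h)
  case (Suc n)
  have "iter_differentiable_on n S (dirderiv v (\<lambda>q. f q + h q))" for v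
  proof (rule iter_differentiable_on_cong[OF assms(1)])
    show "iter_differentiable_on n S (\<lambda>q. dirderiv v f q + dirderiv v h q)" using Suc by auto
    show "\<And>q. q \<in> S \<Longrightarrow> dirderiv v f q + dirderiv v h q = dirderiv v (\<lambda>q. f q + h q) q"
      using Suc.prems by (simp add: dirderiv_add)
  qed
  then show ?case using Suc.prems by auto
qed auto

lemma iter_differentiable_on_minus:
  assumes "open S" "iter_differentiable_on n S f"
  shows "iter_differentiable_on n S (\<lambda>q. - f q)"
  using assms(2)
proof (induction n arbitrary: f)
  case (Suc n)
  have "iter_differentiable_on n S (dirderiv v (\<lambda>q. - f q))" for v
  proof (rule iter_differentiable_on_cong[OF assms(1)])
    show "iter_differentiable_on n S (\<lambda>q. - dirderiv v f q)" using Suc by auto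
    show "\<And>q. q \<in> S \<Longrightarrow> - dirderiv v f q = dirderiv v (\<lambda>q. - f q) q"
      using Suc.prems by (simp add: dirderiv_minus)
  qed
  then show ?case using Suc.prems by auto
qed auto

lemma iter_differentiable_on_mult:
  assumes "open S" "iter_differentiable_on n S f" "iter_differentiable_on n S h"
  shows "iter_differentiable_on n S (\<lambda>q. f q * h q)"
  using assms(2,3)
proof (induction n arbitrary: f h)
  case (Suc n)
  have "iter_differentiable_on n S (dirderiv v (\<lambda>q. f q * h q))" for v
  proof (rule iter_differentiable_on_cong[OF assms(1)])
    show "iter_differentiable_on n S (\<lambda>q. dirderiv v f q * h q + f q * dirderiv v h q)"
      using Suc iter_differentiable_on_Suc_imp[of n S f] iter_differentiable_on_Suc_imp[of n S h]
      by (intro iter_differentiable_on_add[OF assms(1)]) auto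
    show "\<And>q. q \<in> S \<Longrightarrow>
        dirderiv v f q * h q + f q * dirderiv v h q = dirderiv v (\<lambda>q. f q * h q) q"
      using Suc.prems by (simp add: dirderiv_mult)
  qed
  then show ?case using Suc.prems by auto
qed auto

lemma iter_differentiable_on_sum:
  assumes "open S" "finite A" "\<And>i. i \<in> A \<Longrightarrow> iter_differentiable_on n S (f i)"
  shows "iter_differentiable_on n S (\<lambda>q. \<Sum>i\<in>A. f i q)"
  using assms(2,3)
proof (induction A rule: finite_induct)
  case (insert a A)
  then show ?case
    using iter_differentiable_on_add[OF assms(1), of n "f a" "\<lambda>q. \<Sum>i\<in>A. f i q"] by simp
qed (simp add: iter_differentiable_on_const)

lemma iter_differentiable_on_prod:
  assumes "open S" "finite A" "\<And>i. i \<in> A \<Longrightarrow> iter_differentiable_on n S (f i)"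
  shows "iter_differentiable_on n S (\<lambda>q. \<Prod>i\<in>A. f i q)"
  using assms(2,3)
proof (induction A rule: finite_induct)
  case (insert a A)
  then show ?case
    using iter_differentiable_on_mult[OF assms(1), of n "f a" "\<lambda>q. \<Prod>i\<in>A. f i q"] by simp
qed (simp add: iter_differentiable_on_const)

lemma iter_differentiable_on_inverse:
  assumes "open S" "iter_differentiable_on n S f" "\<And>q. q \<in> S \<Longrightarrow> f q \<noteq> 0"
  shows "iter_differentiable_on n S (\<lambda>q. inverse (f q))"
  using assms(2)
proof (induction n)
  case 0 then show ?case using assms(3) differentiable_inverse[of f] by simp
next
  case (Suc n)
  have "iter_differentiable_on n S (dirderiv v (\<lambda>q. inverse (f q)))" for v
  proof (rule iter_differentiable_on_cong[OF assms(1)])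
    have "iter_differentiable_on n S (\<lambda>q. inverse (f q))"
      using Suc iter_differentiable_on_Suc_imp by blast
    then show "iter_differentiable_on n S
        (\<lambda>q. - (dirderiv v f q * (inverse (f q) * inverse (f q))))"
      using Suc by (intro iter_differentiable_on_minus[OF assms(1)]
          iter_differentiable_on_mult[OF assms(1)]) auto
    show "- (dirderiv v f q * (inverse (f q) * inverse (f q))) = dirderiv v (\<lambda>q. inverse (f q)) q"
      if q: "q \<in> S" for q
    proof -
      have "f differentiable at q" using Suc.prems q by auto
      then have "((\<lambda>q. inverse (f q)) has_derivative
          (\<lambda>h. - (inverse (f q) * frechet_derivative f (at q) h * inverse (f q)))) (at q)"
        by (intro Deriv.has_derivative_inverse assms(3)[OF q])
           (simp add: frechet_derivative_works[symmetric])
      from frechet_derivative_at[OF this] show ?thesis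
        unfolding dirderiv_def by (metis (no_types, lifting) mult.commute mult.left_commute)
    qed
  qed
  moreover have "\<forall>p\<in>S. (\<lambda>q. inverse (f q)) differentiable at p"
    using Suc.prems assms(3) differentiable_inverse[of f] by simp
  ultimately show ?case by simp
qed

lemma smooth_on_imp_open: "smooth_on S f \<Longrightarrow> open S"
  by (simp add: smooth_on_def)

lemma smooth_on_imp_differentiable: "smooth_on S f \<Longrightarrow> p \<in> S \<Longrightarrow> f differentiable at p"
  using smooth_on_iff_iter_differentiable_on iter_differentiable_on_imp_differentiable by blast

lemma smooth_on_const: "open S \<Longrightarrow> smooth_on S (\<lambda>q. c)"
  by (simp add: smooth_on_iff_iter_differentiable_on iter_differentiable_on_const)

lemma smooth_on_add: "smooth_on S f \<Longrightarrow> smooth_on S h \<Longrightarrow> smooth_on S (\<lambda>q. f q + h q)"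
  by (simp add: smooth_on_iff_iter_differentiable_on iter_differentiable_on_add)

lemma smooth_on_minus: "smooth_on S f \<Longrightarrow> smooth_on S (\<lambda>q. - f q)"
  by (simp add: smooth_on_iff_iter_differentiable_on iter_differentiable_on_minus)

lemma smooth_on_diff: "smooth_on S f \<Longrightarrow> smooth_on S h \<Longrightarrow> smooth_on S (\<lambda>q. f q - h q)"
  using smooth_on_add[OF _ smooth_on_minus, of S f h] by simp

lemma smooth_on_mult: "smooth_on S f \<Longrightarrow> smooth_on S h \<Longrightarrow> smooth_on S (\<lambda>q. f q * h q)"
  by (simp add: smooth_on_iff_iter_differentiable_on iter_differentiable_on_mult)

lemma smooth_on_sum: "open S \<Longrightarrow> finite A \<Longrightarrow> (\<And>i. i \<in> A \<Longrightarrow> smooth_on S (f i)) \<Longrightarrow>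
    smooth_on S (\<lambda>q. \<Sum>i\<in>A. f i q)"
  by (simp add: smooth_on_iff_iter_differentiable_on iter_differentiable_on_sum)

lemma smooth_on_prod: "open S \<Longrightarrow> finite A \<Longrightarrow> (\<And>i. i \<in> A \<Longrightarrow> smooth_on S (f i)) \<Longrightarrow>
    smooth_on S (\<lambda>q. \<Prod>i\<in>A. f i q)"
  by (simp add: smooth_on_iff_iter_differentiable_on iter_differentiable_on_prod)

lemma smooth_on_inverse: "smooth_on S f \<Longrightarrow> (\<And>q. q \<in> S \<Longrightarrow> f q \<noteq> 0) \<Longrightarrow>
    smooth_on S (\<lambda>q. inverse (f q))"
  by (simp add: smooth_on_iff_iter_differentiable_on iter_differentiable_on_inverse)

lemma smooth_on_if: "smooth_on S f \<Longrightarrow> smooth_on S h \<Longrightarrow> smooth_on S (\<lambda>q. if P then f q else h q)"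
  by (cases P) auto

lemma smooth_on_det:
  fixes F :: "'n::finite \<Rightarrow> 'n \<Rightarrow> 'a::real_normed_vector \<Rightarrow> real"
  assumes "open S" "\<And>i j. smooth_on S (F i j)"
  shows "smooth_on S (\<lambda>q. det (\<chi> i j. F i j q))"
  unfolding det_def
  by (auto intro!: smooth_on_sum smooth_on_mult smooth_on_prod smooth_on_const assms)

lemma smooth_on_dirderiv: "smooth_on S f \<Longrightarrow> smooth_on S (dirderiv v f)"
  unfolding smooth_on_iff_iter_differentiable_on by (metis iter_differentiable_on.simps(2))

lemma smooth_on_cong: "smooth_on S f \<Longrightarrow> (\<And>q. q \<in> S \<Longrightarrow> f q = h q) \<Longrightarrow> smooth_on S h"
  unfolding smooth_on_iff_iter_differentiable_on using iter_differentiable_on_cong by blast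

section \<open>Symmetry of second derivatives\<close>

lemma has_real_derivative_dirderiv_line:
  fixes f :: "'a::real_normed_vector \<Rightarrow> real"
  assumes "f differentiable at (a + s *\<^sub>R u)"
  shows "((\<lambda>s. f (a + s *\<^sub>R u)) has_real_derivative dirderiv u f (a + s *\<^sub>R u)) (at s)"
proof -
  let ?F = "frechet_derivative f (at (a + s *\<^sub>R u))"
  have l: "linear ?F" using linear_frechet_derivative[OF assms] .
  have "((\<lambda>s. a + s *\<^sub>R u) has_derivative (\<lambda>h. h *\<^sub>R u)) (at s)"
    by (auto intro!: derivative_eq_intros)
  from has_derivative_compose[OF this assms[unfolded frechet_derivative_works]]
  have "((\<lambda>s. f (a + s *\<^sub>R u)) has_derivative (\<lambda>h. ?F (h *\<^sub>R u))) (at s)" .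
  moreover have "(\<lambda>h. ?F (h *\<^sub>R u)) = (\<lambda>h. dirderiv u f (a + s *\<^sub>R u) * h)"
    using l by (auto simp: dirderiv_def linear_scale)
  ultimately show ?thesis by (simp add: has_field_derivative_def)
qed

lemma second_difference_mean_value:
  fixes f :: "'a::real_normed_vector \<Rightarrow> real"
  assumes h: "h > 0"
    and sq: "\<And>s t. 0 \<le> s \<Longrightarrow> s \<le> h \<Longrightarrow> 0 \<le> t \<Longrightarrow> t \<le> h \<Longrightarrow> p + s *\<^sub>R u + t *\<^sub>R v \<in> S"
    and d0: "\<And>q. q \<in> S \<Longrightarrow> f differentiable at q"
    and du: "\<And>q. q \<in> S \<Longrightarrow> dirderiv u f differentiable at q"
  shows "\<exists>\<xi> \<eta>. 0 < \<xi> \<and> \<xi> < h \<and> 0 < \<eta> \<and> \<eta> < h \<and>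
     f (p + h *\<^sub>R u + h *\<^sub>R v) - f (p + h *\<^sub>R u) - f (p + h *\<^sub>R v) + f p
       = h * h * dirderiv v (dirderiv u f) (p + \<xi> *\<^sub>R u + \<eta> *\<^sub>R v)"
proof -
  define \<psi> where "\<psi> s = f ((p + h *\<^sub>R v) + s *\<^sub>R u) - f (p + s *\<^sub>R u)" for s
  have "DERIV \<psi> s :> dirderiv u f ((p + h *\<^sub>R v) + s *\<^sub>R u) - dirderiv u f (p + s *\<^sub>R u)"
    if "0 \<le> s" "s \<le> h" for s
  proof -
    have i1: "(p + h *\<^sub>R v) + s *\<^sub>R u \<in> S" using sq[of s h] that h by (simp add: algebra_simps)
    have i2: "p + s *\<^sub>R u \<in> S" using sq[of s 0] that h by simp
    show ?thesis unfolding \<psi>_def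
      by (intro derivative_intros has_real_derivative_dirderiv_line d0 i1 i2)
  qed
  from MVT2[OF h this] obtain \<xi> where \<xi>: "0 < \<xi>" "\<xi> < h"
    and e1: "\<psi> h - \<psi> 0 = (h - 0) * (dirderiv u f ((p + h *\<^sub>R v) + \<xi> *\<^sub>R u) - dirderiv u f (p + \<xi> *\<^sub>R u))"
    by blast
  define chi where "chi t = dirderiv u f ((p + \<xi> *\<^sub>R u) + t *\<^sub>R v)" for t
  have "DERIV chi t :> dirderiv v (dirderiv u f) ((p + \<xi> *\<^sub>R u) + t *\<^sub>R v)"
    if "0 \<le> t" "t \<le> h" for t
  proof -
    have i1: "(p + \<xi> *\<^sub>R u) + t *\<^sub>R v \<in> S" using sq[of \<xi> t] that \<xi> by simp
    show ?thesis unfolding chi_def by (intro has_real_derivative_dirderiv_line du i1)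
  qed
  from MVT2[OF h this] obtain \<eta> where \<eta>: "0 < \<eta>" "\<eta> < h"
    and e2: "chi h - chi 0 = (h - 0) * dirderiv v (dirderiv u f) ((p + \<xi> *\<^sub>R u) + \<eta> *\<^sub>R v)"
    by blast
  have "f (p + h *\<^sub>R u + h *\<^sub>R v) - f (p + h *\<^sub>R u) - f (p + h *\<^sub>R v) + f p = \<psi> h - \<psi> 0"
    unfolding \<psi>_def by (simp add: algebra_simps)
  also have "\<dots> = h * (chi h - chi 0)"
    using e1 unfolding chi_def by (simp add: algebra_simps)
  also have "\<dots> = h * h * dirderiv v (dirderiv u f) (p + \<xi> *\<^sub>R u + \<eta> *\<^sub>R v)"
    using e2 by simp
  finally show ?thesis using \<xi> \<eta> by blast
qed

lemma small_parallelogram: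
  fixes p u v :: "'a::real_normed_vector"
  assumes "D > 0"
  obtains h where "h > 0"
    "\<And>s t. 0 \<le> s \<Longrightarrow> s \<le> h \<Longrightarrow> 0 \<le> t \<Longrightarrow> t \<le> h \<Longrightarrow> dist (p + s *\<^sub>R u + t *\<^sub>R v) p < D"
proof
  define h where "h = D / (2 * (norm u + norm v + 1))"
  have pos: "0 < 2 * (norm u + norm v + 1)" by (smt (verit) norm_ge_zero)
  show h: "h > 0" using assms pos unfolding h_def by (rule divide_pos_pos)
  have hD: "h * (norm u + norm v) < D"
  proof -
    have "h * (norm u + norm v) \<le> h * (norm u + norm v + 1)" using h by simp
    also have "\<dots> = D / 2" unfolding h_def using pos by (simp add: field_simps)
    finally show ?thesis using assms by simp
  qed
  fix s t assume st: "0 \<le> s" "s \<le> h" "0 \<le> t" "t \<le> h"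
  have "dist (p + s *\<^sub>R u + t *\<^sub>R v) p = norm (s *\<^sub>R u + t *\<^sub>R v)" by (simp add: dist_norm)
  also have "\<dots> \<le> s * norm u + t * norm v"
    using st norm_triangle_ineq[of "s *\<^sub>R u" "t *\<^sub>R v"] by simp
  also have "\<dots> \<le> h * norm u + h * norm v"
    using st by (intro add_mono mult_right_mono) auto
  finally show "dist (p + s *\<^sub>R u + t *\<^sub>R v) p < D" using hD by (simp add: algebra_simps)
qed

text \<open>Schwarz's theorem: both mixed derivatives are limits of the same second difference
  quotient, by the mean value theorem applied in either order.\<close>

lemma dirderiv_commute:
  fixes f :: "'a::real_normed_vector \<Rightarrow> real"
  assumes S: "open S" "p \<in> S"
    and d0: "\<And>q. q \<in> S \<Longrightarrow> f differentiable at q"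
    and du: "\<And>q. q \<in> S \<Longrightarrow> dirderiv u f differentiable at q"
    and dv: "\<And>q. q \<in> S \<Longrightarrow> dirderiv v f differentiable at q"
    and cuv: "isCont (dirderiv u (dirderiv v f)) p"
    and cvu: "isCont (dirderiv v (dirderiv u f)) p"
  shows "dirderiv u (dirderiv v f) p = dirderiv v (dirderiv u f) p"
proof (rule ccontr)
  let ?A = "dirderiv v (dirderiv u f)" and ?B = "dirderiv u (dirderiv v f)"
  assume ne: "?B p \<noteq> ?A p"
  define e where "e = \<bar>?A p - ?B p\<bar> / 3"
  have e: "e > 0" using ne by (simp add: e_def)
  obtain d1 where d1: "d1 > 0" "\<And>x. dist x p < d1 \<Longrightarrow> dist (?A x) (?A p) < e"
    using cvu e unfolding continuous_at_eps_delta by blast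
  obtain d2 where d2: "d2 > 0" "\<And>x. dist x p < d2 \<Longrightarrow> dist (?B x) (?B p) < e"
    using cuv e unfolding continuous_at_eps_delta by blast
  obtain r where r: "r > 0" "ball p r \<subseteq> S" using S openE by blast
  obtain h where h: "h > 0" and close:
    "\<And>s t. 0 \<le> s \<Longrightarrow> s \<le> h \<Longrightarrow> 0 \<le> t \<Longrightarrow> t \<le> h \<Longrightarrow>
      dist (p + s *\<^sub>R u + t *\<^sub>R v) p < min r (min d1 d2)"
    by (rule small_parallelogram[of "min r (min d1 d2)" p u v]) (use r d1 d2 in auto)
  have sq: "p + s *\<^sub>R u + t *\<^sub>R v \<in> S" if "0 \<le> s" "s \<le> h" "0 \<le> t" "t \<le> h" for s t
    using close[OF that] r by (auto simp: dist_commute)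
  have sq': "p + s *\<^sub>R v + t *\<^sub>R u \<in> S" if "0 \<le> s" "s \<le> h" "0 \<le> t" "t \<le> h" for s t
    using sq[of t s] that by (simp add: algebra_simps)
  obtain \<xi> \<eta> where 1: "0 < \<xi>" "\<xi> < h" "0 < \<eta>" "\<eta> < h"
    "f (p + h *\<^sub>R u + h *\<^sub>R v) - f (p + h *\<^sub>R u) - f (p + h *\<^sub>R v) + f p
       = h * h * ?A (p + \<xi> *\<^sub>R u + \<eta> *\<^sub>R v)"
    using second_difference_mean_value[OF h sq d0 du] by blast
  obtain \<xi>' \<eta>' where 2: "0 < \<xi>'" "\<xi>' < h" "0 < \<eta>'" "\<eta>' < h"
    "f (p + h *\<^sub>R v + h *\<^sub>R u) - f (p + h *\<^sub>R v) - f (p + h *\<^sub>R u) + f p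
       = h * h * ?B (p + \<xi>' *\<^sub>R v + \<eta>' *\<^sub>R u)"
    using second_difference_mean_value[OF h sq' d0 dv] by blast
  have eq: "?A (p + \<xi> *\<^sub>R u + \<eta> *\<^sub>R v) = ?B (p + \<xi>' *\<^sub>R v + \<eta>' *\<^sub>R u)"
    using 1(5) 2(5) h by (simp add: algebra_simps)
  have "dist (?A (p + \<xi> *\<^sub>R u + \<eta> *\<^sub>R v)) (?A p) < e"
    using d1(2) close[of \<xi> \<eta>] 1 by simp
  moreover have "dist (?B (p + \<xi>' *\<^sub>R v + \<eta>' *\<^sub>R u)) (?B p) < e"
    using d2(2) close[of \<eta>' \<xi>'] 2 by (simp add: algebra_simps)
  ultimately have "\<bar>?A p - ?B p\<bar> < 2 * e" using eq by (simp add: dist_real_def)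
  then show False using e unfolding e_def by simp
qed

lemma smooth_on_dirderiv_commute:
  assumes "smooth_on S f" "p \<in> S"
  shows "dirderiv u (dirderiv v f) p = dirderiv v (dirderiv u f) p"
proof (rule dirderiv_commute[OF smooth_on_imp_open[OF assms(1)] assms(2)])
  show "\<And>q. q \<in> S \<Longrightarrow> f differentiable at q" using assms smooth_on_imp_differentiable by blast
  show "\<And>q. q \<in> S \<Longrightarrow> dirderiv u f differentiable at q"
    using smooth_on_imp_differentiable smooth_on_dirderiv assms by blast
  show "\<And>q. q \<in> S \<Longrightarrow> dirderiv v f differentiable at q"
    using smooth_on_imp_differentiable smooth_on_dirderiv assms by blast
  show "isCont (dirderiv u (dirderiv v f)) p" "isCont (dirderiv v (dirderiv u f)) p"
    using smooth_on_imp_differentiable[OF smooth_on_dirderiv[OF smooth_on_dirderiv[OF assms(1)]] assms(2)]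
    by (auto intro: differentiable_imp_continuous_within)
qed

definition coord_vec :: "'n::finite option \<Rightarrow> 'n pt" where
  "coord_vec a = (case a of None \<Rightarrow> (0, 1) | Some i \<Rightarrow> (axis i 1, 0))"

lemma dtil_eq_dirderiv: "dtil a f p = dirderiv (coord_vec a) f p"
  by (cases a) (auto simp: dtil_def dt_def dx_def coord_vec_def)

lemma dtil_eq_dirderiv_fun: "dtil a f = dirderiv (coord_vec a) f"
  by (rule ext) (rule dtil_eq_dirderiv)

lemma dx_eq_dtil: "dx i = dtil (Some i)"
  by (auto simp: dtil_def fun_eq_iff)

lemma dt_eq_dtil: "dt = dtil None"
  by (auto simp: dtil_def fun_eq_iff)

lemma dtil_const [simp]: "dtil a (\<lambda>q. c) p = 0"
  by (simp add: dtil_eq_dirderiv)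

lemma dtil_cong_open:
  "open S \<Longrightarrow> p \<in> S \<Longrightarrow> (\<And>q. q \<in> S \<Longrightarrow> f q = h q) \<Longrightarrow> dtil a f p = dtil a h p"
  unfolding dtil_eq_dirderiv by (rule dirderiv_cong_open)

lemma dtil_shift: "dtil a (\<lambda>q. f (q + c)) p = dtil a f (p + c)"
  unfolding dtil_eq_dirderiv by (rule dirderiv_shift)

lemma dtil_add: "f differentiable at p \<Longrightarrow> h differentiable at p \<Longrightarrow>
    dtil a (\<lambda>q. f q + h q) p = dtil a f p + dtil a h p"
  unfolding dtil_eq_dirderiv by (rule dirderiv_add)

lemma dtil_diff: "f differentiable at p \<Longrightarrow> h differentiable at p \<Longrightarrow>
    dtil a (\<lambda>q. f q - h q) p = dtil a f p - dtil a h p"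
  unfolding dtil_eq_dirderiv by (rule dirderiv_diff)

lemma dtil_minus: "f differentiable at p \<Longrightarrow> dtil a (\<lambda>q. - f q) p = - dtil a f p"
  unfolding dtil_eq_dirderiv by (rule dirderiv_minus)

lemma dtil_mult: "f differentiable at p \<Longrightarrow> h differentiable at p \<Longrightarrow>
    dtil a (\<lambda>q. f q * h q) p = dtil a f p * h p + f p * dtil a h p"
  unfolding dtil_eq_dirderiv by (rule dirderiv_mult)

lemma dtil_cmult: "f differentiable at p \<Longrightarrow> dtil a (\<lambda>q. c * f q) p = c * dtil a f p"
  unfolding dtil_eq_dirderiv by (rule dirderiv_cmult)

lemma dtil_sum: "finite A \<Longrightarrow> (\<And>i. i \<in> A \<Longrightarrow> f i differentiable at p) \<Longrightarrow>
    dtil a (\<lambda>q. \<Sum>i\<in>A. f i q) p = (\<Sum>i\<in>A. dtil a (f i) p)"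
  unfolding dtil_eq_dirderiv by (rule dirderiv_sum)

lemma smooth_on_dtil: "smooth_on S f \<Longrightarrow> smooth_on S (dtil a f)"
  unfolding dtil_eq_dirderiv_fun by (rule smooth_on_dirderiv)

lemma dtil_commute: "smooth_on S f \<Longrightarrow> p \<in> S \<Longrightarrow> dtil a (dtil b f) p = dtil b (dtil a f) p"
  unfolding dtil_eq_dirderiv_fun by (rule smooth_on_dirderiv_commute)

lemma sum_Kronecker_delta [simp]:
  fixes f :: "'i::finite \<Rightarrow> real"
  shows "(\<Sum>k\<in>UNIV. (if i = k then 1 else 0) * f k) = f i"
    and "(\<Sum>k\<in>UNIV. (if k = i then 1 else 0) * f k) = f i"
    and "(\<Sum>k\<in>UNIV. f k * (if i = k then 1 else 0)) = f i"
    and "(\<Sum>k\<in>UNIV. f k * (if k = i then 1 else 0)) = f i"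
    and "(\<Sum>k\<in>UNIV. c * ((if i = k then 1 else 0) * f k)) = c * f i"
    and "(\<Sum>k\<in>UNIV. c * ((if k = i then 1 else 0) * f k)) = c * f i"
  by (simp_all add: if_distrib if_distribR cong: if_cong)

lemma sum_UNIV_option: "(\<Sum>x\<in>(UNIV::'a::finite option set). f x) = f None + (\<Sum>i\<in>UNIV. f (Some i))"
proof -
  have "(\<Sum>x\<in>(UNIV::'a option set). f x) = (\<Sum>x\<in>insert None (range Some). f x)"
    by (simp only: UNIV_option_conv)
  also have "\<dots> = f None + (\<Sum>i\<in>UNIV. f (Some i))"
    by (subst sum.insert) (auto simp: sum.reindex)
  finally show ?thesis .
qed

lemma sum_distrib_swap:
  fixes X :: "'a::finite \<Rightarrow> 'b::finite \<Rightarrow> real"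
  shows "(\<Sum>b\<in>UNIV. (\<Sum>a\<in>UNIV. X a b) * Y b) = (\<Sum>a\<in>UNIV. \<Sum>b\<in>UNIV. X a b * Y b)"
  unfolding sum_distrib_right by (rule sum.swap)

lemma sum_swap_inner:
  "(\<Sum>a\<in>A. \<Sum>b\<in>B. \<Sum>c\<in>C. F a b c) = (\<Sum>a\<in>A. \<Sum>c\<in>C. \<Sum>b\<in>B. F a b c)"
  by (rule sum.cong[OF refl], rule sum.swap)

lemma sum3_eq_sum_tuple:
  fixes F :: "'i::finite \<Rightarrow> 'i \<Rightarrow> 'i \<Rightarrow> real"
  shows "(\<Sum>a\<in>UNIV. \<Sum>b\<in>UNIV. \<Sum>c\<in>UNIV. F a b c) = (\<Sum>(a,b,c)\<in>UNIV. F a b c)"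
  by (simp add: sum.cartesian_product case_prod_beta)

lemma sum4_eq_sum_tuple:
  fixes F :: "'i::finite \<Rightarrow> 'i \<Rightarrow> 'i \<Rightarrow> 'i \<Rightarrow> real"
  shows "(\<Sum>a\<in>UNIV. \<Sum>b\<in>UNIV. \<Sum>c\<in>UNIV. \<Sum>d\<in>UNIV. F a b c d) = (\<Sum>(a,b,c,d)\<in>UNIV. F a b c d)"
  by (simp add: sum.cartesian_product case_prod_beta)

lemma sum_sum_antisym_eq_0:
  fixes Y :: "'i::finite \<Rightarrow> 'i \<Rightarrow> real"
  assumes "\<And>m n. Y m n + Y n m = 0"
  shows "(\<Sum>m\<in>UNIV. \<Sum>n\<in>UNIV. Y m n) = 0"
proof -
  have "(\<Sum>m\<in>UNIV. \<Sum>n\<in>UNIV. Y m n) = (\<Sum>m\<in>UNIV. \<Sum>n\<in>UNIV. Y n m)"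
    by (rule sum.swap)
  then have "2 * (\<Sum>m\<in>UNIV. \<Sum>n\<in>UNIV. Y m n) = (\<Sum>m\<in>UNIV. \<Sum>n\<in>UNIV. Y m n + Y n m)"
    by (simp add: sum.distrib)
  also have "\<dots> = 0" using assms by simp
  finally show ?thesis by simp
qed

section \<open>Curvature identities for jets of a connection\<close>

text \<open>The arguments \<open>C i j k\<close>, \<open>dC a i j k\<close> and \<open>ddC a b i j k\<close> stand for the values at one
  point of the Christoffel symbols \<open>\<Gamma>\<^sup>k_ij\<close> of a connection and of their derivatives
  \<open>\<partial>_a \<Gamma>\<^sup>k_ij\<close> and \<open>\<partial>_a \<partial>_b \<Gamma>\<^sup>k_ij\<close>, and \<open>Gi\<close> for an inverse metric \<open>g\<^sup>i\<^sup>j\<close>; each \<open>_jet\<close>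
  constant is the value at that point of the correspondingly named tensor. Torsion-freeness and
  the symmetry of second derivatives enter only as symmetry hypotheses on these arrays.\<close>

definition curv_jet :: "('i::finite \<Rightarrow> 'i \<Rightarrow> 'i \<Rightarrow> real) \<Rightarrow> ('i \<Rightarrow> 'i \<Rightarrow> 'i \<Rightarrow> 'i \<Rightarrow> real)
    \<Rightarrow> 'i \<Rightarrow> 'i \<Rightarrow> 'i \<Rightarrow> 'i \<Rightarrow> real" where
  "curv_jet C dC b c d e =
    dC b c d e - dC c b d e + (\<Sum>m\<in>UNIV. C c d m * C b m e - C b d m * C c m e)"

definition dcurv_jet :: "('i::finite \<Rightarrow> 'i \<Rightarrow> 'i \<Rightarrow> real) \<Rightarrow> ('i \<Rightarrow> 'i \<Rightarrow> 'i \<Rightarrow> 'i \<Rightarrow> real)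
    \<Rightarrow> ('i \<Rightarrow> 'i \<Rightarrow> 'i \<Rightarrow> 'i \<Rightarrow> 'i \<Rightarrow> real) \<Rightarrow> 'i \<Rightarrow> 'i \<Rightarrow> 'i \<Rightarrow> 'i \<Rightarrow> 'i \<Rightarrow> real" where
  "dcurv_jet C dC ddC a b c d e = ddC a b c d e - ddC a c b d e
    + (\<Sum>m\<in>UNIV. dC a c d m * C b m e + C c d m * dC a b m e
        - dC a b d m * C c m e - C b d m * dC a c m e)"

definition nabla_curv_jet where
  "nabla_curv_jet C dC ddC a b c d e = dcurv_jet C dC ddC a b c d e
     - (\<Sum>m\<in>UNIV. C a b m * curv_jet C dC m c d e) - (\<Sum>m\<in>UNIV. C a c m * curv_jet C dC b m d e)
     - (\<Sum>m\<in>UNIV. C a d m * curv_jet C dC b c m e) + (\<Sum>m\<in>UNIV. C a m e * curv_jet C dC b c d m)"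

definition ricci_jet where
  "ricci_jet C dC j k = (\<Sum>q\<in>UNIV. curv_jet C dC q j k q)"

definition dricci_jet where
  "dricci_jet C dC ddC a j k = (\<Sum>q\<in>UNIV. dcurv_jet C dC ddC a q j k q)"

definition nabla2_jet :: "('i::finite \<Rightarrow> 'i \<Rightarrow> 'i \<Rightarrow> real) \<Rightarrow> ('i \<Rightarrow> 'i \<Rightarrow> real)
    \<Rightarrow> ('i \<Rightarrow> 'i \<Rightarrow> 'i \<Rightarrow> real) \<Rightarrow> 'i \<Rightarrow> 'i \<Rightarrow> 'i \<Rightarrow> real" where
  "nabla2_jet C X dX a i j = dX a i j - (\<Sum>m\<in>UNIV. C a i m * X m j) - (\<Sum>m\<in>UNIV. C a j m * X i m)"

lemma second_bianchi_jet:
  assumes sC: "\<And>i j k. C i j k = C j i k"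
    and sdC: "\<And>a i j k. dC a i j k = dC a j i k"
    and sdd: "\<And>a b i j k. ddC a b i j k = ddC b a i j k"
  shows "nabla_curv_jet C dC ddC a b c d e + nabla_curv_jet C dC ddC b c a d e
    + nabla_curv_jet C dC ddC c a b d e = 0"
proof -
  define F1 where "F1 a b c m = dC a c d m * C b m e + C c d m * dC a b m e
      - dC a b d m * C c m e - C b d m * dC a c m e
      - C a b m * (dC m c d e - dC c m d e) - C a c m * (dC b m d e - dC m b d e)
      - C a d m * (dC b c m e - dC c b m e) + C a m e * (dC b c d m - dC c b d m)" for a b c m
  define F2 where "F2 a b c m n = - (C a b m * (C c d n * C m n e - C m d n * C c n e))
      - C a c m * (C m d n * C b n e - C b d n * C m n e)
      - C a d m * (C c m n * C b n e - C b m n * C c n e)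
      + C a m e * (C c d n * C b n m - C b d n * C c n m)" for a b c m n
  have expand: "nabla_curv_jet C dC ddC a b c d e = (ddC a b c d e - ddC a c b d e)
      + (\<Sum>m\<in>UNIV. F1 a b c m) + (\<Sum>m\<in>UNIV. \<Sum>n\<in>UNIV. F2 a b c m n)" for a b c
    unfolding nabla_curv_jet_def dcurv_jet_def curv_jet_def F1_def F2_def
    by (simp add: algebra_simps sum.distrib sum_subtractf sum_distrib_left sum_negf)
  have ddC_cancel: "(ddC a b c d e - ddC a c b d e) + (ddC b c a d e - ddC b a c d e)
      + (ddC c a b d e - ddC c b a d e) = 0"
    using sdd[of a b] sdd[of a c] sdd[of b c] by simp
  have F1_cancel: "F1 a b c m + F1 b c a m + F1 c a b m = 0" for m
    unfolding F1_def by (simp add: sC sdC algebra_simps)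
  have F2_cancel: "(\<Sum>m\<in>UNIV. \<Sum>n\<in>UNIV. F2 a b c m n + F2 b c a m n + F2 c a b m n) = 0"
    by (rule sum_sum_antisym_eq_0) (simp add: F2_def sC algebra_simps)
  have "nabla_curv_jet C dC ddC a b c d e + nabla_curv_jet C dC ddC b c a d e
      + nabla_curv_jet C dC ddC c a b d e
    = ((ddC a b c d e - ddC a c b d e) + (ddC b c a d e - ddC b a c d e)
        + (ddC c a b d e - ddC c b a d e))
      + (\<Sum>m\<in>UNIV. F1 a b c m + F1 b c a m + F1 c a b m)
      + (\<Sum>m\<in>UNIV. \<Sum>n\<in>UNIV. F2 a b c m n + F2 b c a m n + F2 c a b m n)"
    unfolding expand by (simp add: sum.distrib algebra_simps)
  then show ?thesis unfolding ddC_cancel F1_cancel F2_cancel by simp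
qed

lemma trace_nabla_curv_jet:
  "(\<Sum>a\<in>UNIV. nabla_curv_jet C dC ddC x a y d a) = nabla2_jet C (ricci_jet C dC) (dricci_jet C dC ddC) x y d"
proof -
  have 1: "(\<Sum>a\<in>UNIV. \<Sum>m\<in>UNIV. C x a m * curv_jet C dC m y d a)
      = (\<Sum>a\<in>UNIV. \<Sum>m\<in>UNIV. C x m a * curv_jet C dC a y d m)"
    by (rule sum.swap)
  have 2: "(\<Sum>a\<in>UNIV. \<Sum>m\<in>UNIV. C x y m * curv_jet C dC a m d a) = (\<Sum>m\<in>UNIV. C x y m * ricci_jet C dC m d)"
    unfolding ricci_jet_def sum_distrib_left by (rule sum.swap)
  have 3: "(\<Sum>a\<in>UNIV. \<Sum>m\<in>UNIV. C x d m * curv_jet C dC a y m a) = (\<Sum>m\<in>UNIV. C x d m * ricci_jet C dC y m)"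
    unfolding ricci_jet_def sum_distrib_left by (rule sum.swap)
  show ?thesis
    unfolding nabla_curv_jet_def nabla2_jet_def sum.distrib sum_subtractf 1 2 3
    by (simp add: dricci_jet_def)
qed

lemma nabla_curv_jet_antisym: "nabla_curv_jet C dC ddC x y z d e = - nabla_curv_jet C dC ddC x z y d e"
  unfolding nabla_curv_jet_def dcurv_jet_def curv_jet_def
  by (simp add: algebra_simps sum.distrib sum_subtractf sum_distrib_left sum_negf)

lemma second_bianchi_jet_traced:
  assumes sC: "\<And>i j k. C i j k = C j i k"
    and sdC: "\<And>a i j k. dC a i j k = dC a j i k"
    and sdd: "\<And>a b i j k. ddC a b i j k = ddC b a i j k"
  shows "(\<Sum>a\<in>UNIV. nabla_curv_jet C dC ddC a b c d a)
    = nabla2_jet C (ricci_jet C dC) (dricci_jet C dC ddC) b c d - nabla2_jet C (ricci_jet C dC) (dricci_jet C dC ddC) c b d"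
proof -
  have "(\<Sum>a\<in>UNIV. nabla_curv_jet C dC ddC a b c d a + nabla_curv_jet C dC ddC b c a d a + nabla_curv_jet C dC ddC c a b d a)
      = 0"
    using second_bianchi_jet[where C=C and dC=dC and ddC=ddC, OF sC sdC sdd] by simp
  moreover have "(\<Sum>a\<in>UNIV. nabla_curv_jet C dC ddC b c a d a)
      = - nabla2_jet C (ricci_jet C dC) (dricci_jet C dC ddC) b c d"
    using trace_nabla_curv_jet[of C dC ddC b c d]
    by (simp add: nabla_curv_jet_antisym[of C dC ddC b c] sum_negf)
  ultimately show ?thesis
    using trace_nabla_curv_jet[of C dC ddC c b d] by (simp add: sum.distrib)
qed

lemma nabla2_jet_sym:
  assumes "\<And>i j. X i j = X j i" "\<And>a i j. dX a i j = dX a j i"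
  shows "nabla2_jet C X dX a i j = nabla2_jet C X dX a j i"
  unfolding nabla2_jet_def using assms by (simp add: algebra_simps)

definition dginv_jet :: "('i::finite \<Rightarrow> 'i \<Rightarrow> 'i \<Rightarrow> real) \<Rightarrow> ('i \<Rightarrow> 'i \<Rightarrow> real)
    \<Rightarrow> 'i \<Rightarrow> 'i \<Rightarrow> 'i \<Rightarrow> real" where
  "dginv_jet C Gi a b c = - (\<Sum>m\<in>UNIV. C a m b * Gi m c) - (\<Sum>m\<in>UNIV. C a m c * Gi b m)"

definition raise_jet :: "('i::finite \<Rightarrow> 'i \<Rightarrow> real) \<Rightarrow> ('i \<Rightarrow> 'i \<Rightarrow> real) \<Rightarrow> 'i \<Rightarrow> 'i \<Rightarrow> real" where
  "raise_jet Gi X l k = (\<Sum>j\<in>UNIV. Gi k j * X l j)"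

definition draise_jet where
  "draise_jet C Gi X dX a l k = (\<Sum>j\<in>UNIV. dginv_jet C Gi a k j * X l j + Gi k j * dX a l j)"

definition div_raise_jet where
  "div_raise_jet C Gi X dX l = (\<Sum>r\<in>UNIV. draise_jet C Gi X dX r l r
    + (\<Sum>m\<in>UNIV. raise_jet Gi X l m * C r m r) - (\<Sum>m\<in>UNIV. raise_jet Gi X r m * C l m r))"

definition dtrace_jet where
  "dtrace_jet C Gi X dX c = (\<Sum>b\<in>UNIV. \<Sum>d\<in>UNIV. dginv_jet C Gi c b d * X b d + Gi b d * dX c b d)"

definition ginv_curv_jet where
  "ginv_curv_jet C dC Gi c a = (\<Sum>b\<in>UNIV. \<Sum>d\<in>UNIV. Gi b d * curv_jet C dC b c d a)"

definition dginv_curv_jet where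
  "dginv_curv_jet C dC ddC Gi a' c a = (\<Sum>b\<in>UNIV. \<Sum>d\<in>UNIV.
    dginv_jet C Gi a' b d * curv_jet C dC b c d a + Gi b d * dcurv_jet C dC ddC a' b c d a)"

lemma trace_nabla2_jet:
  fixes C :: "'i::finite \<Rightarrow> 'i \<Rightarrow> 'i \<Rightarrow> real"
  shows "(\<Sum>b\<in>UNIV. \<Sum>d\<in>UNIV. Gi b d * nabla2_jet C X dX c b d) = dtrace_jet C Gi X dX c"
proof -
  have L: "(\<Sum>b\<in>UNIV. \<Sum>d\<in>UNIV. Gi b d * nabla2_jet C X dX c b d)
     = (\<Sum>b\<in>UNIV. \<Sum>d\<in>UNIV. Gi b d * dX c b d)
       - (\<Sum>b\<in>UNIV. \<Sum>d\<in>UNIV. \<Sum>m\<in>UNIV. Gi b d * C c b m * X m d)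
       - (\<Sum>b\<in>UNIV. \<Sum>d\<in>UNIV. \<Sum>m\<in>UNIV. Gi b d * C c d m * X b m)"
    unfolding nabla2_jet_def by (simp add: algebra_simps sum_subtractf sum_distrib_left sum.distrib)
  have R: "dtrace_jet C Gi X dX c
     = (\<Sum>b\<in>UNIV. \<Sum>d\<in>UNIV. Gi b d * dX c b d)
       - (\<Sum>b\<in>UNIV. \<Sum>d\<in>UNIV. \<Sum>m\<in>UNIV. C c m b * Gi m d * X b d)
       - (\<Sum>b\<in>UNIV. \<Sum>d\<in>UNIV. \<Sum>m\<in>UNIV. C c m d * Gi b m * X b d)"
    unfolding dtrace_jet_def dginv_jet_def
    by (simp add: algebra_simps sum_subtractf sum_distrib_left sum_distrib_right sum.distrib)
  have 1: "(\<Sum>b\<in>UNIV. \<Sum>d\<in>UNIV. \<Sum>m\<in>UNIV. Gi b d * C c b m * X m d)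
      = (\<Sum>b\<in>UNIV. \<Sum>d\<in>UNIV. \<Sum>m\<in>UNIV. C c m b * Gi m d * X b d)"
  proof -
    have "(\<Sum>b\<in>UNIV. \<Sum>d\<in>UNIV. \<Sum>m\<in>UNIV. Gi b d * C c b m * X m d)
        = (\<Sum>b\<in>UNIV. \<Sum>m\<in>UNIV. \<Sum>d\<in>UNIV. Gi b d * C c b m * X m d)" by (rule sum_swap_inner)
    also have "\<dots> = (\<Sum>m\<in>UNIV. \<Sum>b\<in>UNIV. \<Sum>d\<in>UNIV. Gi b d * C c b m * X m d)" by (rule sum.swap)
    also have "\<dots> = (\<Sum>m\<in>UNIV. \<Sum>d\<in>UNIV. \<Sum>b\<in>UNIV. Gi b d * C c b m * X m d)" by (rule sum_swap_inner)
    finally show ?thesis by (simp add: mult_ac)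
  qed
  have 2: "(\<Sum>b\<in>UNIV. \<Sum>d\<in>UNIV. \<Sum>m\<in>UNIV. Gi b d * C c d m * X b m)
      = (\<Sum>b\<in>UNIV. \<Sum>d\<in>UNIV. \<Sum>m\<in>UNIV. C c m d * Gi b m * X b d)"
  proof -
    have "(\<Sum>b\<in>UNIV. \<Sum>d\<in>UNIV. \<Sum>m\<in>UNIV. Gi b d * C c d m * X b m)
        = (\<Sum>b\<in>UNIV. \<Sum>m\<in>UNIV. \<Sum>d\<in>UNIV. Gi b d * C c d m * X b m)" by (rule sum_swap_inner)
    then show ?thesis by (simp add: mult_ac)
  qed
  show ?thesis unfolding L R 1 2 ..
qed

lemma ginv_nabla2_jet_eq_div:
  assumes sC: "\<And>i j k. C i j k = C j i k"
  shows "(\<Sum>b\<in>UNIV. \<Sum>d\<in>UNIV. Gi b d * nabla2_jet C X dX b c d) = div_raise_jet C Gi X dX c"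
proof -
  have L: "(\<Sum>b\<in>UNIV. \<Sum>d\<in>UNIV. Gi b d * nabla2_jet C X dX b c d)
     = (\<Sum>b\<in>UNIV. \<Sum>d\<in>UNIV. Gi b d * dX b c d)
       - (\<Sum>b\<in>UNIV. \<Sum>d\<in>UNIV. \<Sum>m\<in>UNIV. Gi b d * C b c m * X m d)
       - (\<Sum>b\<in>UNIV. \<Sum>d\<in>UNIV. \<Sum>m\<in>UNIV. Gi b d * C b d m * X c m)"
    unfolding nabla2_jet_def by (simp add: algebra_simps sum_subtractf sum_distrib_left sum.distrib)
  have R: "div_raise_jet C Gi X dX c = (\<Sum>r\<in>UNIV. \<Sum>j\<in>UNIV. Gi r j * dX r c j)
     - (\<Sum>r\<in>UNIV. \<Sum>j\<in>UNIV. \<Sum>m\<in>UNIV. C r m r * Gi m j * X c j)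
     - (\<Sum>r\<in>UNIV. \<Sum>j\<in>UNIV. \<Sum>m\<in>UNIV. C r m j * Gi r m * X c j)
     + (\<Sum>r\<in>UNIV. \<Sum>m\<in>UNIV. \<Sum>j\<in>UNIV. Gi m j * X c j * C r m r)
     - (\<Sum>r\<in>UNIV. \<Sum>m\<in>UNIV. \<Sum>j\<in>UNIV. Gi m j * X r j * C c m r)"
    unfolding div_raise_jet_def draise_jet_def raise_jet_def dginv_jet_def
    by (simp add: algebra_simps sum_subtractf sum_distrib_left sum_distrib_right sum.distrib)
  have 1: "(\<Sum>r\<in>UNIV. \<Sum>j\<in>UNIV. \<Sum>m\<in>UNIV. C r m r * Gi m j * X c j)
      = (\<Sum>r\<in>UNIV. \<Sum>m\<in>UNIV. \<Sum>j\<in>UNIV. Gi m j * X c j * C r m r)"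
    unfolding sum3_eq_sum_tuple
    by (rule sum.reindex_bij_witness[where i="\<lambda>(r,m,j). (r,j,m)" and j="\<lambda>(r,j,m). (r,m,j)"])
       (auto simp: mult_ac)
  have 2: "(\<Sum>r\<in>UNIV. \<Sum>j\<in>UNIV. \<Sum>m\<in>UNIV. C r m j * Gi r m * X c j)
      = (\<Sum>b\<in>UNIV. \<Sum>d\<in>UNIV. \<Sum>m\<in>UNIV. Gi b d * C b d m * X c m)"
    unfolding sum3_eq_sum_tuple
    by (rule sum.reindex_bij_witness[where i="\<lambda>(b,d,m). (b,m,d)" and j="\<lambda>(r,j,m). (r,m,j)"])
       (auto simp: mult_ac)
  have 3: "(\<Sum>r\<in>UNIV. \<Sum>m\<in>UNIV. \<Sum>j\<in>UNIV. Gi m j * X r j * C c m r)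
      = (\<Sum>b\<in>UNIV. \<Sum>d\<in>UNIV. \<Sum>m\<in>UNIV. Gi b d * C b c m * X m d)"
    unfolding sum3_eq_sum_tuple
    by (rule sum.reindex_bij_witness[where i="\<lambda>(b,d,m). (m,b,d)" and j="\<lambda>(r,m,j). (m,j,r)"])
       (auto simp: mult_ac sC[of c])
  show ?thesis unfolding L R 1 2 3 by simp
qed

lemma ginv_traced_bianchi_jet:
  assumes sC: "\<And>i j k. C i j k = C j i k"
  shows "(\<Sum>b\<in>UNIV. \<Sum>d\<in>UNIV. Gi b d * (\<Sum>a\<in>UNIV. nabla_curv_jet C dC ddC a b c d a))
    = (\<Sum>a\<in>UNIV. dginv_curv_jet C dC ddC Gi a c a
        + (\<Sum>m\<in>UNIV. ginv_curv_jet C dC Gi c m * C a m a) - (\<Sum>m\<in>UNIV. ginv_curv_jet C dC Gi a m * C c m a))"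
proof -
  let ?R = "curv_jet C dC" and ?dR = "dcurv_jet C dC ddC"
  have L: "(\<Sum>b\<in>UNIV. \<Sum>d\<in>UNIV. Gi b d * (\<Sum>a\<in>UNIV. nabla_curv_jet C dC ddC a b c d a))
    = (\<Sum>b\<in>UNIV. \<Sum>d\<in>UNIV. \<Sum>a\<in>UNIV. Gi b d * ?dR a b c d a)
     - (\<Sum>b\<in>UNIV. \<Sum>d\<in>UNIV. \<Sum>a\<in>UNIV. \<Sum>m\<in>UNIV. Gi b d * C a b m * ?R m c d a)
     - (\<Sum>b\<in>UNIV. \<Sum>d\<in>UNIV. \<Sum>a\<in>UNIV. \<Sum>m\<in>UNIV. Gi b d * C a c m * ?R b m d a)
     - (\<Sum>b\<in>UNIV. \<Sum>d\<in>UNIV. \<Sum>a\<in>UNIV. \<Sum>m\<in>UNIV. Gi b d * C a d m * ?R b c m a)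
     + (\<Sum>b\<in>UNIV. \<Sum>d\<in>UNIV. \<Sum>a\<in>UNIV. \<Sum>m\<in>UNIV. Gi b d * C a m a * ?R b c d m)"
    unfolding nabla_curv_jet_def
    by (simp only: sum_distrib_left sum.distrib sum_subtractf right_diff_distrib distrib_left mult.assoc)
  have R: "(\<Sum>a\<in>UNIV. dginv_curv_jet C dC ddC Gi a c a
      + (\<Sum>m\<in>UNIV. ginv_curv_jet C dC Gi c m * C a m a) - (\<Sum>m\<in>UNIV. ginv_curv_jet C dC Gi a m * C c m a))
    = (\<Sum>a\<in>UNIV. \<Sum>b\<in>UNIV. \<Sum>d\<in>UNIV. Gi b d * ?dR a b c d a)
     - (\<Sum>a\<in>UNIV. \<Sum>b\<in>UNIV. \<Sum>d\<in>UNIV. \<Sum>m\<in>UNIV. C a m b * Gi m d * ?R b c d a)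
     - (\<Sum>a\<in>UNIV. \<Sum>b\<in>UNIV. \<Sum>d\<in>UNIV. \<Sum>m\<in>UNIV. C a m d * Gi b m * ?R b c d a)
     + (\<Sum>a\<in>UNIV. \<Sum>m\<in>UNIV. \<Sum>b\<in>UNIV. \<Sum>d\<in>UNIV. Gi b d * ?R b c d m * C a m a)
     - (\<Sum>a\<in>UNIV. \<Sum>m\<in>UNIV. \<Sum>b\<in>UNIV. \<Sum>d\<in>UNIV. Gi b d * ?R b a d m * C c m a)"
    unfolding dginv_curv_jet_def ginv_curv_jet_def dginv_jet_def
    by (simp add: algebra_simps sum_subtractf sum_distrib_left sum_distrib_right sum.distrib)
  have 1: "(\<Sum>b\<in>UNIV. \<Sum>d\<in>UNIV. \<Sum>a\<in>UNIV. Gi b d * ?dR a b c d a)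
      = (\<Sum>a\<in>UNIV. \<Sum>b\<in>UNIV. \<Sum>d\<in>UNIV. Gi b d * ?dR a b c d a)"
    unfolding sum3_eq_sum_tuple
    by (rule sum.reindex_bij_witness[where i="\<lambda>(a,b,d). (b,d,a)" and j="\<lambda>(b,d,a). (a,b,d)"]) auto
  have 2: "(\<Sum>b\<in>UNIV. \<Sum>d\<in>UNIV. \<Sum>a\<in>UNIV. \<Sum>m\<in>UNIV. Gi b d * C a b m * ?R m c d a)
      = (\<Sum>a\<in>UNIV. \<Sum>b\<in>UNIV. \<Sum>d\<in>UNIV. \<Sum>m\<in>UNIV. C a m b * Gi m d * ?R b c d a)"
    unfolding sum4_eq_sum_tuple
    by (rule sum.reindex_bij_witness[where i="\<lambda>(a,b,d,m). (m,d,a,b)" and j="\<lambda>(b,d,a,m). (a,m,d,b)"])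
       (auto simp: mult_ac)
  have 3: "(\<Sum>b\<in>UNIV. \<Sum>d\<in>UNIV. \<Sum>a\<in>UNIV. \<Sum>m\<in>UNIV. Gi b d * C a c m * ?R b m d a)
      = (\<Sum>a\<in>UNIV. \<Sum>m\<in>UNIV. \<Sum>b\<in>UNIV. \<Sum>d\<in>UNIV. Gi b d * ?R b a d m * C c m a)"
    unfolding sum4_eq_sum_tuple
    by (rule sum.reindex_bij_witness[where i="\<lambda>(a,m,b,d). (b,d,m,a)" and j="\<lambda>(b,d,a,m). (m,a,b,d)"])
       (auto simp: mult_ac sC[of _ c])
  have 4: "(\<Sum>b\<in>UNIV. \<Sum>d\<in>UNIV. \<Sum>a\<in>UNIV. \<Sum>m\<in>UNIV. Gi b d * C a d m * ?R b c m a)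
      = (\<Sum>a\<in>UNIV. \<Sum>b\<in>UNIV. \<Sum>d\<in>UNIV. \<Sum>m\<in>UNIV. C a m d * Gi b m * ?R b c d a)"
    unfolding sum4_eq_sum_tuple
    by (rule sum.reindex_bij_witness[where i="\<lambda>(a,b,d,m). (b,m,a,d)" and j="\<lambda>(b,d,a,m). (a,b,m,d)"])
       (auto simp: mult_ac)
  have 5: "(\<Sum>b\<in>UNIV. \<Sum>d\<in>UNIV. \<Sum>a\<in>UNIV. \<Sum>m\<in>UNIV. Gi b d * C a m a * ?R b c d m)
      = (\<Sum>a\<in>UNIV. \<Sum>m\<in>UNIV. \<Sum>b\<in>UNIV. \<Sum>d\<in>UNIV. Gi b d * ?R b c d m * C a m a)"
    unfolding sum4_eq_sum_tuple
    by (rule sum.reindex_bij_witness[where i="\<lambda>(a,m,b,d). (b,d,a,m)" and j="\<lambda>(b,d,a,m). (a,m,b,d)"])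
       (auto simp: mult_ac)
  show ?thesis unfolding L R 1 2 3 4 5 by simp
qed

text \<open>\<open>HQ0\<close> and \<open>HQ1\<close> say that contracting the curvature with \<open>Gi\<close> over its first and third
  index gives minus the Ricci tensor; in a chart this is the antisymmetry of the lowered curvature
  tensor.\<close>

lemma contracted_bianchi_jet:
  assumes sC: "\<And>i j k. C i j k = C j i k"
    and sdC: "\<And>a i j k. dC a i j k = dC a j i k"
    and sdd: "\<And>a b i j k. ddC a b i j k = ddC b a i j k"
    and HQ0: "\<And>c a. ginv_curv_jet C dC Gi c a = - raise_jet Gi (ricci_jet C dC) c a"
    and HQ1: "\<And>a' c a. dginv_curv_jet C dC ddC Gi a' c a
        = - draise_jet C Gi (ricci_jet C dC) (dricci_jet C dC ddC) a' c a"
  shows "2 * div_raise_jet C Gi (ricci_jet C dC) (dricci_jet C dC ddC) c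
      = dtrace_jet C Gi (ricci_jet C dC) (dricci_jet C dC ddC) c"
proof -
  let ?X = "ricci_jet C dC" and ?dX = "dricci_jet C dC ddC"
  have "(\<Sum>b\<in>UNIV. \<Sum>d\<in>UNIV. Gi b d * (\<Sum>a\<in>UNIV. nabla_curv_jet C dC ddC a b c d a))
      = (\<Sum>b\<in>UNIV. \<Sum>d\<in>UNIV. Gi b d * nabla2_jet C ?X ?dX b c d)
          - (\<Sum>b\<in>UNIV. \<Sum>d\<in>UNIV. Gi b d * nabla2_jet C ?X ?dX c b d)"
    unfolding second_bianchi_jet_traced[OF sC sdC sdd]
    by (simp add: right_diff_distrib sum_subtractf)
  also have "\<dots> = div_raise_jet C Gi ?X ?dX c - dtrace_jet C Gi ?X ?dX c"
    unfolding ginv_nabla2_jet_eq_div[OF sC] trace_nabla2_jet ..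
  finally have 1: "(\<Sum>b\<in>UNIV. \<Sum>d\<in>UNIV. Gi b d * (\<Sum>a\<in>UNIV. nabla_curv_jet C dC ddC a b c d a))
      = div_raise_jet C Gi ?X ?dX c - dtrace_jet C Gi ?X ?dX c" .
  have 2: "(\<Sum>b\<in>UNIV. \<Sum>d\<in>UNIV. Gi b d * (\<Sum>a\<in>UNIV. nabla_curv_jet C dC ddC a b c d a))
      = - div_raise_jet C Gi ?X ?dX c"
    unfolding ginv_traced_bianchi_jet[OF sC] HQ0 HQ1 div_raise_jet_def
    by (simp add: sum_negf sum_subtractf sum.distrib)
  show ?thesis using 1 2 by simp
qed

definition dmetric_jet :: "('i::finite \<Rightarrow> 'i \<Rightarrow> 'i \<Rightarrow> real) \<Rightarrow> ('i \<Rightarrow> 'i \<Rightarrow> real) \<Rightarrow> 'i \<Rightarrow> 'i \<Rightarrow> 'i \<Rightarrow> real" where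
  "dmetric_jet C g a b c = (\<Sum>m\<in>UNIV. C a b m * g m c) + (\<Sum>m\<in>UNIV. C a c m * g b m)"

definition ddmetric_jet where
  "ddmetric_jet C dC g b c d e = (\<Sum>m\<in>UNIV. dC b c d m * g m e + C c d m * dmetric_jet C g b m e)
     + (\<Sum>m\<in>UNIV. dC b c e m * g d m + C c e m * dmetric_jet C g b d m)"

text \<open>\<open>ddmetric_jet C dC g b c d e\<close> is \<open>\<partial>_b \<partial>_c g_de\<close> computed from metric compatibility, so the
  hypothesis \<open>SCH\<close> is the symmetry of the second derivatives of the metric.\<close>

lemma lowered_curv_jet_antisym:
  assumes sC: "\<And>i j k. C i j k = C j i k"
    and sg: "\<And>i j. g i j = g j i"
    and SCH: "ddmetric_jet C dC g b c d e = ddmetric_jet C dC g c b d e"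
  shows "(\<Sum>m\<in>UNIV. g e m * curv_jet C dC b c d m) + (\<Sum>m\<in>UNIV. g d m * curv_jet C dC b c e m) = 0"
proof -
  define T1 where "T1 m = g e m * (dC b c d m - dC c b d m) + g d m * (dC b c e m - dC c b e m)" for m
  define T2 where "T2 m n = g e m * (C c d n * C b n m - C b d n * C c n m)
       + g d m * (C c e n * C b n m - C b e n * C c n m)" for m n
  define D1 where "D1 m = (dC b c d m - dC c b d m) * g m e + (dC b c e m - dC c b e m) * g d m" for m
  define D2 where "D2 m n
      = C c d m * (C b m n * g n e + C b e n * g m n) - C b d m * (C c m n * g n e + C c e n * g m n)
      + C c e m * (C b d n * g n m + C b m n * g d n) - C b e m * (C c d n * g n m + C c m n * g d n)" for m n
  have t: "(\<Sum>m\<in>UNIV. g e m * curv_jet C dC b c d m) + (\<Sum>m\<in>UNIV. g d m * curv_jet C dC b c e m)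
      = (\<Sum>m\<in>UNIV. T1 m) + (\<Sum>m\<in>UNIV. \<Sum>n\<in>UNIV. T2 m n)"
    unfolding curv_jet_def T1_def T2_def
    by (simp add: algebra_simps sum.distrib sum_subtractf sum_distrib_left)
  have d: "ddmetric_jet C dC g b c d e - ddmetric_jet C dC g c b d e
      = (\<Sum>m\<in>UNIV. D1 m) + (\<Sum>m\<in>UNIV. \<Sum>n\<in>UNIV. D2 m n)"
    unfolding ddmetric_jet_def dmetric_jet_def D1_def D2_def
    by (simp add: algebra_simps sum.distrib sum_subtractf sum_distrib_left)
  have 1: "(\<Sum>m\<in>UNIV. T1 m) = (\<Sum>m\<in>UNIV. D1 m)"
    unfolding T1_def D1_def by (simp add: sg[of e] mult.commute)
  have 2: "(\<Sum>m\<in>UNIV. \<Sum>n\<in>UNIV. T2 m n - D2 m n) = 0"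
    by (rule sum_sum_antisym_eq_0) (simp add: T2_def D2_def algebra_simps sg sC)
  have "(\<Sum>m\<in>UNIV. \<Sum>n\<in>UNIV. T2 m n) = (\<Sum>m\<in>UNIV. \<Sum>n\<in>UNIV. D2 m n)"
    using 2 by (simp add: sum_subtractf)
  then show ?thesis using t d 1 SCH by simp
qed

lemma ginv_curv_antisym_contract:
  fixes Gi g :: "'i::finite \<Rightarrow> 'i \<Rightarrow> real"
  assumes ginv_metric: "\<And>i j. (\<Sum>m\<in>UNIV. Gi i m * g m j) = (if i = j then 1 else 0)"
    and anti: "\<And>b c d e. (\<Sum>m\<in>UNIV. g e m * R b c d m) + (\<Sum>m\<in>UNIV. g d m * R b c e m) = 0"
  shows "(\<Sum>b\<in>UNIV. \<Sum>d\<in>UNIV. Gi b d * R b c d a) = - (\<Sum>j\<in>UNIV. Gi a j * (\<Sum>q\<in>UNIV. R q c j q))"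
proof -
  have r: "R b c d a = - (\<Sum>e\<in>UNIV. Gi a e * (\<Sum>m\<in>UNIV. g d m * R b c e m))" for b d
  proof -
    have "R b c d a = (\<Sum>m\<in>UNIV. (if a = m then 1 else 0) * R b c d m)" by simp
    also have "\<dots> = (\<Sum>m\<in>UNIV. (\<Sum>e\<in>UNIV. Gi a e * g e m) * R b c d m)" by (simp only: ginv_metric)
    also have "\<dots> = (\<Sum>e\<in>UNIV. Gi a e * (\<Sum>m\<in>UNIV. g e m * R b c d m))"
      by (simp add: sum_distrib_left sum_distrib_right mult.assoc) (rule sum.swap)
    also have "\<dots> = (\<Sum>e\<in>UNIV. Gi a e * (- (\<Sum>m\<in>UNIV. g d m * R b c e m)))"
    proof (rule sum.cong[OF refl])
      fix e
      have "(\<Sum>m\<in>UNIV. g e m * R b c d m) = - (\<Sum>m\<in>UNIV. g d m * R b c e m)"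
        using anti[of e b c d] by (simp add: eq_neg_iff_add_eq_0)
      then show "Gi a e * (\<Sum>m\<in>UNIV. g e m * R b c d m) = Gi a e * (- (\<Sum>m\<in>UNIV. g d m * R b c e m))"
        by simp
    qed
    finally show ?thesis by (simp add: sum_negf)
  qed
  have "(\<Sum>b\<in>UNIV. \<Sum>d\<in>UNIV. Gi b d * R b c d a)
      = - (\<Sum>b\<in>UNIV. \<Sum>d\<in>UNIV. \<Sum>e\<in>UNIV. \<Sum>m\<in>UNIV. Gi a e * (Gi b d * g d m) * R b c e m)"
    unfolding r by (simp add: sum_distrib_left sum_negf mult_ac)
  also have "\<dots> = - (\<Sum>e\<in>UNIV. \<Sum>b\<in>UNIV. \<Sum>m\<in>UNIV. \<Sum>d\<in>UNIV. Gi a e * (Gi b d * g d m) * R b c e m)"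
    unfolding sum4_eq_sum_tuple
    by (subst sum.reindex_bij_witness[where i="\<lambda>(e,b,m,d). (b,d,e,m)" and j="\<lambda>(b,d,e,m). (e,b,m,d)"]) auto
  also have "\<dots> = - (\<Sum>e\<in>UNIV. \<Sum>b\<in>UNIV. \<Sum>m\<in>UNIV. Gi a e * (\<Sum>d\<in>UNIV. Gi b d * g d m) * R b c e m)"
    by (simp add: sum_distrib_left sum_distrib_right)
  also have "\<dots> = - (\<Sum>j\<in>UNIV. Gi a j * (\<Sum>q\<in>UNIV. R q c j q))"
    by (simp add: ginv_metric sum_distrib_left mult.assoc)
  finally show ?thesis .
qed

text \<open>The variation \<open>\<delta>R_jk\<close> of the Ricci tensor in the direction \<open>A = \<delta>\<Gamma>\<close> of the Christoffel
  symbols, with \<open>dA\<close> the derivatives of \<open>A\<close>.\<close>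

definition palatini_jet_variation where
  "palatini_jet_variation C A dA j k
      = (\<Sum>q\<in>UNIV. dA q j k q - dA j q k q + (\<Sum>m\<in>UNIV. A j k m * C q m q + C j k m * A q m q
      - A q k m * C j m q - C q k m * A j m q))"

lemma palatini_jet:
  fixes C :: "'i::finite \<Rightarrow> 'i \<Rightarrow> 'i \<Rightarrow> real"
  assumes sC: "\<And>i j k. C i j k = C j i k"
  shows "(\<Sum>j\<in>UNIV. \<Sum>k\<in>UNIV. Gi j k * palatini_jet_variation C A dA j k)
    = (\<Sum>r\<in>UNIV. (\<Sum>j\<in>UNIV. \<Sum>k\<in>UNIV. dginv_jet C Gi r j k * A j k r + Gi j k * dA r j k r)
          + (\<Sum>m\<in>UNIV. C r m r * (\<Sum>j\<in>UNIV. \<Sum>k\<in>UNIV. Gi j k * A j k m)))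
      - (\<Sum>j\<in>UNIV. \<Sum>k\<in>UNIV. Gi j k * ((\<Sum>r\<in>UNIV. dA j r k r) - (\<Sum>m\<in>UNIV. C j k m * (\<Sum>r\<in>UNIV. A r m r))))"
proof -
  have L: "(\<Sum>j\<in>UNIV. \<Sum>k\<in>UNIV. Gi j k * palatini_jet_variation C A dA j k)
    = (\<Sum>j\<in>UNIV. \<Sum>k\<in>UNIV. \<Sum>q\<in>UNIV. Gi j k * dA q j k q)
    - (\<Sum>j\<in>UNIV. \<Sum>k\<in>UNIV. \<Sum>q\<in>UNIV. Gi j k * dA j q k q)
    + (\<Sum>j\<in>UNIV. \<Sum>k\<in>UNIV. \<Sum>q\<in>UNIV. \<Sum>m\<in>UNIV. Gi j k * A j k m * C q m q)
    + (\<Sum>j\<in>UNIV. \<Sum>k\<in>UNIV. \<Sum>q\<in>UNIV. \<Sum>m\<in>UNIV. Gi j k * C j k m * A q m q)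
    - (\<Sum>j\<in>UNIV. \<Sum>k\<in>UNIV. \<Sum>q\<in>UNIV. \<Sum>m\<in>UNIV. Gi j k * A q k m * C j m q)
    - (\<Sum>j\<in>UNIV. \<Sum>k\<in>UNIV. \<Sum>q\<in>UNIV. \<Sum>m\<in>UNIV. Gi j k * C q k m * A j m q)"
    unfolding palatini_jet_variation_def
    by (simp add: algebra_simps sum.distrib sum_subtractf sum_distrib_left)
  have R: "(\<Sum>r\<in>UNIV. (\<Sum>j\<in>UNIV. \<Sum>k\<in>UNIV. dginv_jet C Gi r j k * A j k r + Gi j k * dA r j k r)
          + (\<Sum>m\<in>UNIV. C r m r * (\<Sum>j\<in>UNIV. \<Sum>k\<in>UNIV. Gi j k * A j k m)))
      - (\<Sum>j\<in>UNIV. \<Sum>k\<in>UNIV. Gi j k * ((\<Sum>r\<in>UNIV. dA j r k r) - (\<Sum>m\<in>UNIV. C j k m * (\<Sum>r\<in>UNIV. A r m r))))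
    = - (\<Sum>r\<in>UNIV. \<Sum>j\<in>UNIV. \<Sum>k\<in>UNIV. \<Sum>m\<in>UNIV. C r m j * Gi m k * A j k r)
      - (\<Sum>r\<in>UNIV. \<Sum>j\<in>UNIV. \<Sum>k\<in>UNIV. \<Sum>m\<in>UNIV. C r m k * Gi j m * A j k r)
      + (\<Sum>r\<in>UNIV. \<Sum>j\<in>UNIV. \<Sum>k\<in>UNIV. Gi j k * dA r j k r)
      + (\<Sum>r\<in>UNIV. \<Sum>m\<in>UNIV. \<Sum>j\<in>UNIV. \<Sum>k\<in>UNIV. C r m r * Gi j k * A j k m)
      - (\<Sum>j\<in>UNIV. \<Sum>k\<in>UNIV. \<Sum>r\<in>UNIV. Gi j k * dA j r k r)
      + (\<Sum>j\<in>UNIV. \<Sum>k\<in>UNIV. \<Sum>m\<in>UNIV. \<Sum>r\<in>UNIV. Gi j k * C j k m * A r m r)"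
    unfolding dginv_jet_def
    by (simp add: algebra_simps sum.distrib sum_subtractf sum_distrib_left sum_distrib_right)
  have 1: "(\<Sum>j\<in>UNIV. \<Sum>k\<in>UNIV. \<Sum>q\<in>UNIV. Gi j k * dA q j k q) = (\<Sum>r\<in>UNIV. \<Sum>j\<in>UNIV. \<Sum>k\<in>UNIV. Gi j k * dA r j k r)"
    unfolding sum3_eq_sum_tuple
    by (rule sum.reindex_bij_witness[where i="\<lambda>(r,j,k). (j,k,r)" and j="\<lambda>(j,k,r). (r,j,k)"]) auto
  have 2: "(\<Sum>j\<in>UNIV. \<Sum>k\<in>UNIV. \<Sum>q\<in>UNIV. \<Sum>m\<in>UNIV. Gi j k * A j k m * C q m q)
      = (\<Sum>r\<in>UNIV. \<Sum>m\<in>UNIV. \<Sum>j\<in>UNIV. \<Sum>k\<in>UNIV. C r m r * Gi j k * A j k m)"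
    unfolding sum4_eq_sum_tuple
    by (rule sum.reindex_bij_witness[where i="\<lambda>(r,m,j,k). (j,k,r,m)" and j="\<lambda>(j,k,r,m). (r,m,j,k)"])
       (auto simp: mult_ac)
  have 3: "(\<Sum>j\<in>UNIV. \<Sum>k\<in>UNIV. \<Sum>q\<in>UNIV. \<Sum>m\<in>UNIV. Gi j k * C j k m * A q m q)
      = (\<Sum>j\<in>UNIV. \<Sum>k\<in>UNIV. \<Sum>m\<in>UNIV. \<Sum>r\<in>UNIV. Gi j k * C j k m * A r m r)"
    unfolding sum4_eq_sum_tuple
    by (rule sum.reindex_bij_witness[where i="\<lambda>(j,k,m,r). (j,k,r,m)" and j="\<lambda>(j,k,r,m). (j,k,m,r)"]) auto
  have 4: "(\<Sum>j\<in>UNIV. \<Sum>k\<in>UNIV. \<Sum>q\<in>UNIV. \<Sum>m\<in>UNIV. Gi j k * A q k m * C j m q)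
      = (\<Sum>r\<in>UNIV. \<Sum>j\<in>UNIV. \<Sum>k\<in>UNIV. \<Sum>m\<in>UNIV. C r m j * Gi m k * A j k r)"
    unfolding sum4_eq_sum_tuple
    by (rule sum.reindex_bij_witness[where i="\<lambda>(r,j',k',m'). (m',k',j',r)" and j="\<lambda>(j,k,q,m). (m,q,k,j)"])
       (auto simp: mult_ac sC[of _ j for j])
  have 5: "(\<Sum>j\<in>UNIV. \<Sum>k\<in>UNIV. \<Sum>q\<in>UNIV. \<Sum>m\<in>UNIV. Gi j k * C q k m * A j m q)
      = (\<Sum>r\<in>UNIV. \<Sum>j\<in>UNIV. \<Sum>k\<in>UNIV. \<Sum>m\<in>UNIV. C r m k * Gi j m * A j k r)"
    unfolding sum4_eq_sum_tuple
    by (rule sum.reindex_bij_witness[where i="\<lambda>(r,j',k',m'). (j',m',r,k')" and j="\<lambda>(j,k,q,m). (q,j,m,k)"])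
       (auto simp: mult_ac)
  show ?thesis unfolding L R 1 2 3 4 5 by simp
qed


lemma nabla2_jet_koszul_combination:
  assumes sC: "\<And>i j k. C i j k = C j i k" and sX: "\<And>i j. X i j = X j i"
  shows "nabla2_jet C X dX i j l + nabla2_jet C X dX j i l - nabla2_jet C X dX l i j
    = (dX i j l + dX j i l - dX l i j) - 2 * (\<Sum>m\<in>UNIV. C i j m * X m l)"
  unfolding nabla2_jet_def
  by (simp add: algebra_simps sum.distrib sum_subtractf sC[of l] sC[of j i] sX[of j] sX[of _ l]
      sum_distrib_left[symmetric])

text \<open>With \<open>X\<close> the Ricci tensor, \<open>dX\<close> its derivatives and \<open>Y l = \<partial>_i g_jl + \<partial>_j g_il - \<partial>_l g_ij\<close>,
  the left-hand side is \<open>\<partial>_t \<Gamma>\<^sup>k_ij\<close> computed from \<open>\<partial>_t g_ij = -2 R_ij\<close>.\<close>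

lemma dt_christoffel_jet:
  fixes C :: "'i::finite \<Rightarrow> 'i \<Rightarrow> 'i \<Rightarrow> real"
  assumes sC: "\<And>i j k. C i j k = C j i k" and sX: "\<And>i j. X i j = X j i"
    and HY: "\<And>b. (\<Sum>l\<in>UNIV. Gi b l * Y l) = 2 * C i j b"
  shows "1/2 * (\<Sum>l\<in>UNIV. (2 * (\<Sum>a\<in>UNIV. \<Sum>b\<in>UNIV. Gi k a * X a b * Gi b l)) * Y l
            + Gi k l * (-2 * dX i j l + -2 * dX j i l - -2 * dX l i j))
    = - (\<Sum>l\<in>UNIV. Gi k l * (nabla2_jet C X dX i j l + nabla2_jet C X dX j i l - nabla2_jet C X dX l i j))"
proof -
  define S where "S l = (\<Sum>a\<in>UNIV. \<Sum>b\<in>UNIV. Gi k a * X a b * Gi b l)" for l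
  have pointwise: "(2 * S l) * Y l + Gi k l * (-2 * dX i j l + -2 * dX j i l - -2 * dX l i j)
      = 2 * (S l * Y l - Gi k l * (dX i j l + dX j i l - dX l i j))" for l
    by (simp add: algebra_simps)
  have L: "1/2 * (\<Sum>l\<in>UNIV. (2 * S l) * Y l + Gi k l * (-2 * dX i j l + -2 * dX j i l - -2 * dX l i j))
      = (\<Sum>l\<in>UNIV. S l * Y l) - (\<Sum>l\<in>UNIV. Gi k l * (dX i j l + dX j i l - dX l i j))"
    unfolding pointwise by (simp add: sum_distrib_left[symmetric] sum_subtractf)
  have "(\<Sum>l\<in>UNIV. S l * Y l) = (\<Sum>l\<in>UNIV. \<Sum>a\<in>UNIV. \<Sum>b\<in>UNIV. Gi k a * X a b * Gi b l * Y l)"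
    unfolding S_def by (simp add: sum_distrib_right)
  also have "\<dots> = (\<Sum>a\<in>UNIV. \<Sum>b\<in>UNIV. \<Sum>l\<in>UNIV. Gi k a * X a b * Gi b l * Y l)"
    unfolding sum3_eq_sum_tuple
    by (rule sum.reindex_bij_witness[where i="\<lambda>(a,b,l). (l,a,b)" and j="\<lambda>(l,a,b). (a,b,l)"]) auto
  also have "\<dots> = (\<Sum>a\<in>UNIV. \<Sum>b\<in>UNIV. Gi k a * X a b * (\<Sum>l\<in>UNIV. Gi b l * Y l))"
    by (simp add: sum_distrib_left mult.assoc)
  also have "\<dots> = 2 * (\<Sum>l\<in>UNIV. \<Sum>m\<in>UNIV. Gi k l * C i j m * X m l)"
    unfolding HY by (simp add: sum_distrib_left sX[of _ l for l] mult_ac)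
  finally have SY: "(\<Sum>l\<in>UNIV. S l * Y l) = 2 * (\<Sum>l\<in>UNIV. \<Sum>m\<in>UNIV. Gi k l * C i j m * X m l)" .
  show ?thesis
    unfolding S_def[symmetric] L SY nabla2_jet_koszul_combination[OF sC sX]
    by (simp add: right_diff_distrib sum_subtractf sum_distrib_left mult_ac)
qed

lemma ginv_X_ginv_contract:
  fixes Gi X :: "'i::finite \<Rightarrow> 'i \<Rightarrow> real"
  assumes sX: "\<And>i j. X i j = X j i"
  shows "(\<Sum>l\<in>UNIV. (2 * (\<Sum>a\<in>UNIV. \<Sum>b\<in>UNIV. Gi k a * X a b * Gi b l)) * Y l)
     = 2 * (\<Sum>l\<in>UNIV. Gi k l * (\<Sum>m\<in>UNIV. (\<Sum>j\<in>UNIV. Gi m j * Y j) * X m l))"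
proof -
  have "(\<Sum>l\<in>UNIV. (2 * (\<Sum>a\<in>UNIV. \<Sum>b\<in>UNIV. Gi k a * X a b * Gi b l)) * Y l)
      = 2 * (\<Sum>l\<in>UNIV. \<Sum>a\<in>UNIV. \<Sum>b\<in>UNIV. Gi k a * X a b * Gi b l * Y l)"
    by (simp add: sum_distrib_left sum_distrib_right mult.assoc)
  also have "(\<Sum>l\<in>UNIV. \<Sum>a\<in>UNIV. \<Sum>b\<in>UNIV. Gi k a * X a b * Gi b l * Y l)
      = (\<Sum>l\<in>UNIV. \<Sum>m\<in>UNIV. \<Sum>j\<in>UNIV. Gi k l * (Gi m j * Y j * X m l))"
    unfolding sum3_eq_sum_tuple
    by (rule sum.reindex_bij_witness[where i="\<lambda>(l',m,j). (j,l',m)" and j="\<lambda>(l,a,b). (a,b,l)"])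
       (auto simp: mult_ac sX[of _ b for b])
  also have "\<dots> = (\<Sum>l\<in>UNIV. Gi k l * (\<Sum>m\<in>UNIV. (\<Sum>j\<in>UNIV. Gi m j * Y j) * X m l))"
    by (simp add: sum_distrib_left sum_distrib_right)
  finally show ?thesis .
qed

lemma ginv_square_trace:
  fixes Gi X :: "'i::finite \<Rightarrow> 'i \<Rightarrow> real"
  assumes sX: "\<And>i j. X i j = X j i"
  shows "(\<Sum>j\<in>UNIV. \<Sum>k\<in>UNIV. (2 * (\<Sum>a\<in>UNIV. \<Sum>b\<in>UNIV. Gi j a * X a b * Gi b k)) * X j k)
      = 2 * (\<Sum>r\<in>UNIV. \<Sum>m\<in>UNIV. raise_jet Gi X r m * raise_jet Gi X m r)"
proof -
  have "(\<Sum>j\<in>UNIV. \<Sum>k\<in>UNIV. (2 * (\<Sum>a\<in>UNIV. \<Sum>b\<in>UNIV. Gi j a * X a b * Gi b k)) * X j k)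
     = 2 * (\<Sum>j\<in>UNIV. \<Sum>k\<in>UNIV. \<Sum>a\<in>UNIV. \<Sum>b\<in>UNIV. Gi j a * X a b * Gi b k * X j k)"
    by (simp add: sum_distrib_left sum_distrib_right mult.assoc)
  also have "(\<Sum>j\<in>UNIV. \<Sum>k\<in>UNIV. \<Sum>a\<in>UNIV. \<Sum>b\<in>UNIV. Gi j a * X a b * Gi b k * X j k)
     = (\<Sum>r\<in>UNIV. \<Sum>m\<in>UNIV. \<Sum>i\<in>UNIV. \<Sum>j\<in>UNIV. Gi m j * X r j * (Gi r i * X m i))"
    unfolding sum4_eq_sum_tuple
    by (rule sum.reindex_bij_witness[where i="\<lambda>(r,m,i,j'). (r,j',i,m)" and j="\<lambda>(j,k,a,b). (j,b,a,k)"])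
       (auto simp: mult_ac sX[of _ b for b])
  also have "\<dots> = (\<Sum>r\<in>UNIV. \<Sum>m\<in>UNIV. raise_jet Gi X r m * raise_jet Gi X m r)"
    unfolding raise_jet_def by (simp add: sum_distrib_left sum_distrib_right)
  finally show ?thesis .
qed

lemma laplacian_jet_divergence_form:
  "(\<Sum>j\<in>UNIV. \<Sum>k\<in>UNIV. Gi j k * (ddS j k - (\<Sum>m\<in>UNIV. C j k m * dS m)))
     = (\<Sum>r\<in>UNIV. \<Sum>l\<in>UNIV. dginv_jet C Gi r r l * dS l + Gi r l * ddS r l)
     + (\<Sum>r\<in>UNIV. \<Sum>m\<in>UNIV. (\<Sum>l\<in>UNIV. Gi m l * dS l) * C r m r)"
proof -
  have L: "(\<Sum>j\<in>UNIV. \<Sum>k\<in>UNIV. Gi j k * (ddS j k - (\<Sum>m\<in>UNIV. C j k m * dS m)))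
    = (\<Sum>j\<in>UNIV. \<Sum>k\<in>UNIV. Gi j k * ddS j k) - (\<Sum>j\<in>UNIV. \<Sum>k\<in>UNIV. \<Sum>m\<in>UNIV. Gi j k * C j k m * dS m)"
    by (simp add: right_diff_distrib sum_subtractf sum_distrib_left mult.assoc)
  have R: "(\<Sum>r\<in>UNIV. \<Sum>l\<in>UNIV. dginv_jet C Gi r r l * dS l + Gi r l * ddS r l)
    + (\<Sum>r\<in>UNIV. \<Sum>m\<in>UNIV. (\<Sum>l\<in>UNIV. Gi m l * dS l) * C r m r)
    = - (\<Sum>r\<in>UNIV. \<Sum>l\<in>UNIV. \<Sum>m\<in>UNIV. C r m r * Gi m l * dS l)
      - (\<Sum>r\<in>UNIV. \<Sum>l\<in>UNIV. \<Sum>m\<in>UNIV. C r m l * Gi r m * dS l)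
      + (\<Sum>r\<in>UNIV. \<Sum>l\<in>UNIV. Gi r l * ddS r l)
      + (\<Sum>r\<in>UNIV. \<Sum>m\<in>UNIV. \<Sum>l\<in>UNIV. Gi m l * dS l * C r m r)"
    unfolding dginv_jet_def
    by (simp add: algebra_simps sum.distrib sum_subtractf sum_distrib_left sum_distrib_right)
  have 1: "(\<Sum>r\<in>UNIV. \<Sum>l\<in>UNIV. \<Sum>m\<in>UNIV. C r m r * Gi m l * dS l)
      = (\<Sum>r\<in>UNIV. \<Sum>m\<in>UNIV. \<Sum>l\<in>UNIV. Gi m l * dS l * C r m r)"
    by (subst sum_swap_inner) (simp add: mult_ac)
  have 2: "(\<Sum>r\<in>UNIV. \<Sum>l\<in>UNIV. \<Sum>m\<in>UNIV. C r m l * Gi r m * dS l)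
      = (\<Sum>j\<in>UNIV. \<Sum>k\<in>UNIV. \<Sum>m\<in>UNIV. Gi j k * C j k m * dS m)"
    by (subst sum_swap_inner) (simp add: mult_ac)
  show ?thesis unfolding L R 1 2 by simp
qed

section \<open>Riemannian metrics in a chart\<close>

locale riemannian_chart =
  fixes \<Omega> :: "('n::finite) pt set" and g :: "'n \<Rightarrow> 'n \<Rightarrow> 'n pt \<Rightarrow> real"
  assumes opn: "open \<Omega>"
    and smooth_metric: "smooth_on \<Omega> (g i j)"
    and metric_sym: "p \<in> \<Omega> \<Longrightarrow> g i j p = g j i p"
    and posdef: "p \<in> \<Omega> \<Longrightarrow> v \<noteq> 0 \<Longrightarrow> v \<bullet> (gmat g p *v v) > 0"
begin

abbreviation G where "G \<equiv> ginv g"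

lemma det_gmat_nonzero: "p \<in> \<Omega> \<Longrightarrow> det (gmat g p) \<noteq> 0"
proof
  assume p: "p \<in> \<Omega>" and d: "det (gmat g p) = 0"
  have "\<not> inj ((*v) (gmat g p))"
    using det_nz_iff_inj[of "(*v) (gmat g p)"] d by (simp add: matrix_of_matrix_vector_mul)
  then obtain x y where xy: "x \<noteq> y" "gmat g p *v x = gmat g p *v y" unfolding inj_def by blast
  define v where "v = x - y"
  have "v \<noteq> 0" "gmat g p *v v = 0" using xy by (auto simp: v_def matrix_vector_mult_diff_distrib)
  then show False using posdef[OF p, of v] by simp
qed

lemma invertible_gmat: "p \<in> \<Omega> \<Longrightarrow> invertible (gmat g p)"
  using det_gmat_nonzero invertible_det_nz by blast

lemma gmat_matrix_inv: "p \<in> \<Omega> \<Longrightarrow> gmat g p ** matrix_inv (gmat g p)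
    = mat 1 \<and> matrix_inv (gmat g p) ** gmat g p = mat 1"
  using invertible_gmat[of p] unfolding invertible_def matrix_inv_def by (rule someI_ex)

lemma metric_ginv: "p \<in> \<Omega> \<Longrightarrow> (\<Sum>m\<in>UNIV. g i m p * G m j p) = (if i = j then 1 else 0)"
  using arg_cong[OF conjunct1[OF gmat_matrix_inv], of p "\<lambda>M. M $ i $ j"]
  by (simp add: matrix_matrix_mult_def mat_def gmat_def ginv_def)

lemma ginv_metric: "p \<in> \<Omega> \<Longrightarrow> (\<Sum>m\<in>UNIV. G i m p * g m j p) = (if i = j then 1 else 0)"
  using arg_cong[OF conjunct2[OF gmat_matrix_inv], of p "\<lambda>M. M $ i $ j"]
  by (simp add: matrix_matrix_mult_def mat_def gmat_def ginv_def)

lemma ginv_sym: "p \<in> \<Omega> \<Longrightarrow> G i j p = G j i p"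
proof -
  assume p: "p \<in> \<Omega>"
  have d: "(\<Sum>a\<in>UNIV. G a i p * g a b p) = (if b = i then 1 else 0)" for b
    using metric_ginv[OF p, of b i] metric_sym[OF p] by (simp add: mult.commute)
  have "G i j p = (\<Sum>b\<in>UNIV. (if b = i then 1 else 0) * G b j p)" by simp
  also have "\<dots> = (\<Sum>b\<in>UNIV. (\<Sum>a\<in>UNIV. G a i p * g a b p) * G b j p)"
    by (simp only: d)
  also have "\<dots> = (\<Sum>a\<in>UNIV. G a i p * (\<Sum>b\<in>UNIV. g a b p * G b j p))"
    unfolding sum_distrib_left sum_distrib_right mult.assoc by (rule sum.swap)
  also have "\<dots> = G j i p" by (simp add: metric_ginv[OF p])
  finally show ?thesis .
qed

lemma ginv_cramer: "p \<in> \<Omega> \<Longrightarrow>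
   G k j p = det (\<chi> r s. if s = k then (if r = j then 1 else 0) else g r s p) / det (gmat g p)"
proof -
  assume p: "p \<in> \<Omega>"
  let ?A = "gmat g p" and ?x = "matrix_inv (gmat g p) *v axis j 1"
  have "?A *v ?x = axis j 1"
    using gmat_matrix_inv[OF p] by (simp add: matrix_vector_mul_assoc)
  then have "?x = (\<chi> k. det (\<chi> i l. if l = k then (axis j 1 :: real^'n) $ i else ?A $ i $ l) / det ?A)"
    using cramer[OF det_gmat_nonzero[OF p]] by blast
  then have "?x $ k = det (\<chi> i l. if l = k then (axis j 1 :: real^'n) $ i else ?A $ i $ l) / det ?A"
    by simp
  moreover have "?x $ k = G k j p"
    by (simp add: matrix_vector_mult_def ginv_def axis_def if_distrib cong: if_cong)
  moreover have "(\<chi> i l. if l = k then (axis j 1 :: real^'n) $ i else ?A $ i $ l) =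
      (\<chi> r s. if s = k then (if r = j then 1 else 0) else g r s p)"
    by (simp add: vec_eq_iff axis_def gmat_def)
  ultimately show ?thesis by simp
qed

lemma smooth_ginv: "smooth_on \<Omega> (G k j)"
proof (rule smooth_on_cong)
  show "smooth_on \<Omega> (\<lambda>q. det (\<chi> r s. if s = k then (if r = j then 1 else 0) else g r s q) *
     inverse (det (gmat g q)))"
  proof (rule smooth_on_mult)
    show "smooth_on \<Omega> (\<lambda>q. det (\<chi> r s. if s = k then (if r = j then 1 else 0) else g r s q))"
      by (rule smooth_on_det[OF opn])
         (auto intro!: smooth_on_if smooth_metric smooth_on_const[OF opn])
    show "smooth_on \<Omega> (\<lambda>q. inverse (det (gmat g q)))"
      unfolding gmat_def
      by (rule smooth_on_inverse, rule smooth_on_det[OF opn smooth_metric])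
         (use det_gmat_nonzero in \<open>auto simp: gmat_def\<close>)
  qed
  show "\<And>q. q \<in> \<Omega> \<Longrightarrow> det (\<chi> r s. if s = k then (if r = j then 1 else 0) else g r s q) *
     inverse (det (gmat g q)) = G k j q"
    by (simp add: ginv_cramer divide_inverse)
qed

abbreviation \<Gamma> where "\<Gamma> \<equiv> christoffel g"

lemma dtil_ginv: assumes p: "p \<in> \<Omega>"
  shows "dtil a (G i j) p = - (\<Sum>k\<in>UNIV. \<Sum>l\<in>UNIV. G i k p * dtil a (g k l) p * G l j p)"
proof -
  have z: "(\<Sum>m\<in>UNIV. dtil a (g k m) p * G m j p + g k m p * dtil a (G m j) p) = 0" for k
  proof -
    have "dtil a (\<lambda>q. \<Sum>m\<in>UNIV. g k m q * G m j q) p = dtil a (\<lambda>q. if k = j then 1 else 0) p"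
      by (rule dtil_cong_open[OF opn p]) (simp add: metric_ginv)
    also have "\<dots> = 0" by simp
    finally show ?thesis
      using smooth_on_imp_differentiable[OF smooth_metric p] smooth_on_imp_differentiable[OF smooth_ginv p]
      by (simp add: dtil_sum dtil_mult differentiable_mult)
  qed
  have "dtil a (G i j) p = (\<Sum>m\<in>UNIV. (if i = m then 1 else 0) * dtil a (G m j) p)" by simp
  also have "\<dots> = (\<Sum>m\<in>UNIV. (\<Sum>k\<in>UNIV. G i k p * g k m p) * dtil a (G m j) p)"
    by (simp only: ginv_metric[OF p])
  also have "\<dots> = (\<Sum>k\<in>UNIV. G i k p * (\<Sum>m\<in>UNIV. g k m p * dtil a (G m j) p))"
    by (simp add: sum_distrib_swap sum_distrib_left mult.assoc)
  also have "\<dots> = (\<Sum>k\<in>UNIV. G i k p * (- (\<Sum>m\<in>UNIV. dtil a (g k m) p * G m j p)))"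
  proof (rule sum.cong[OF refl])
    fix k
    have "(\<Sum>m\<in>UNIV. g k m p * dtil a (G m j) p) = - (\<Sum>m\<in>UNIV. dtil a (g k m) p * G m j p)"
      using z[of k] by (simp add: sum.distrib eq_neg_iff_add_eq_0 add.commute)
    then show "G i k p * (\<Sum>m\<in>UNIV. g k m p * dtil a (G m j) p) =
      G i k p * (- (\<Sum>m\<in>UNIV. dtil a (g k m) p * G m j p))" by simp
  qed
  also have "\<dots> = - (\<Sum>k\<in>UNIV. \<Sum>l\<in>UNIV. G i k p * dtil a (g k l) p * G l j p)"
    by (simp add: sum_distrib_left sum_negf mult.assoc)
  finally show ?thesis .
qed

lemma dtil_metric_sym: "p \<in> \<Omega> \<Longrightarrow> dtil a (g i j) p = dtil a (g j i) p"
  by (rule dtil_cong_open[OF opn]) (auto intro: metric_sym)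

lemma christoffel_dtil: "\<Gamma> i j k p = 1/2 * (\<Sum>l\<in>UNIV. G k l p *
      (dtil (Some i) (g j l) p + dtil (Some j) (g i l) p - dtil (Some l) (g i j) p))"
  by (simp add: christoffel_def dx_eq_dtil)

lemma smooth_christoffel: "smooth_on \<Omega> (\<Gamma> i j k)"
  unfolding christoffel_def dx_eq_dtil
  by (intro smooth_on_mult smooth_on_sum smooth_on_add smooth_on_diff smooth_on_const[OF opn] smooth_ginv smooth_on_dtil[OF smooth_metric] opn) auto

lemma christoffel_sym: "p \<in> \<Omega> \<Longrightarrow> \<Gamma> i j k p = \<Gamma> j i k p"
  unfolding christoffel_dtil by (simp add: dtil_metric_sym[of p _ i j] algebra_simps)

lemma christoffel_lowered: assumes p: "p \<in> \<Omega>"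
  shows "(\<Sum>m\<in>UNIV. \<Gamma> a b m p * g m c p) =
     1/2 * (dtil (Some a) (g b c) p + dtil (Some b) (g a c) p - dtil (Some c) (g a b) p)"
proof -
  let ?X = "\<lambda>l. dtil (Some a) (g b l) p + dtil (Some b) (g a l) p - dtil (Some l) (g a b) p"
  have "(\<Sum>m\<in>UNIV. \<Gamma> a b m p * g m c p) = (\<Sum>m\<in>UNIV. (1/2 * (\<Sum>l\<in>UNIV. G m l p * ?X l)) * g m c p)"
    unfolding christoffel_dtil ..
  also have "\<dots> = (\<Sum>m\<in>UNIV. \<Sum>l\<in>UNIV. 1/2 * (g c m p * G m l p * ?X l))"
    by (simp add: sum_distrib_left sum_distrib_right metric_sym[OF p, of _ c] mult_ac)
  also have "\<dots> = (\<Sum>l\<in>UNIV. \<Sum>m\<in>UNIV. 1/2 * (g c m p * G m l p * ?X l))"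
    by (rule sum.swap)
  also have "\<dots> = 1/2 * (\<Sum>l\<in>UNIV. (\<Sum>m\<in>UNIV. g c m p * G m l p) * ?X l)"
    by (simp add: sum_distrib_left sum_distrib_right)
  also have "\<dots> = 1/2 * ?X c" by (simp add: metric_ginv[OF p])
  finally show ?thesis .
qed

lemma metric_compatible: assumes p: "p \<in> \<Omega>"
  shows "dtil (Some a) (g b c) p = (\<Sum>m\<in>UNIV. \<Gamma> a b m p * g m c p) + (\<Sum>m\<in>UNIV. \<Gamma> a c m p * g b m p)"
proof -
  have "(\<Sum>m\<in>UNIV. \<Gamma> a c m p * g b m p) = (\<Sum>m\<in>UNIV. \<Gamma> a c m p * g m b p)"
    using metric_sym[OF p] by simp
  also have "\<dots> = 1/2 * (dtil (Some a) (g c b) p + dtil (Some c) (g a b) p - dtil (Some b) (g a c) p)"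
    by (rule christoffel_lowered[OF p])
  finally have 2: "(\<Sum>m\<in>UNIV. \<Gamma> a c m p * g b m p) = \<dots>" .
  have 3: "dtil (Some a) (g c b) p = dtil (Some a) (g b c) p" by (rule dtil_metric_sym[OF p])
  show ?thesis unfolding 2 christoffel_lowered[OF p] 3 by (simp add: algebra_simps)
qed

lemma ginv_compatible: assumes p: "p \<in> \<Omega>"
  shows "dtil (Some a) (G b c) p = - (\<Sum>m\<in>UNIV. \<Gamma> a m b p * G m c p) - (\<Sum>m\<in>UNIV. \<Gamma> a m c p * G b m p)"
proof -
  have "dtil (Some a) (G b c) p = - (\<Sum>k\<in>UNIV. \<Sum>l\<in>UNIV. G b k p *
      ((\<Sum>m\<in>UNIV. \<Gamma> a k m p * g m l p) + (\<Sum>m\<in>UNIV. \<Gamma> a l m p * g k m p)) * G l c p)"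
    by (simp add: dtil_ginv[OF p] metric_compatible[OF p])
  also have "\<dots> = - (\<Sum>k\<in>UNIV. \<Sum>l\<in>UNIV. \<Sum>m\<in>UNIV. G b k p * \<Gamma> a k m p * g m l p * G l c p)
                  - (\<Sum>k\<in>UNIV. \<Sum>l\<in>UNIV. \<Sum>m\<in>UNIV. G b k p * \<Gamma> a l m p * g k m p * G l c p)"
    by (simp add: algebra_simps sum_distrib_left sum_distrib_right sum.distrib sum_subtractf)
  also have "(\<Sum>k\<in>UNIV. \<Sum>l\<in>UNIV. \<Sum>m\<in>UNIV. G b k p * \<Gamma> a k m p * g m l p * G l c p)
      = (\<Sum>k\<in>UNIV. \<Sum>m\<in>UNIV. G b k p * \<Gamma> a k m p * (\<Sum>l\<in>UNIV. g m l p * G l c p))"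
    apply (simp add: sum_distrib_left mult.assoc)
    apply (rule sum.cong[OF refl]) apply (subst sum.swap) by simp
  also have "\<dots> = (\<Sum>m\<in>UNIV. \<Gamma> a m c p * G b m p)"
    by (simp add: metric_ginv[OF p] christoffel_sym[OF p, of a] mult.commute)
  also have "(\<Sum>k\<in>UNIV. \<Sum>l\<in>UNIV. \<Sum>m\<in>UNIV. G b k p * \<Gamma> a l m p * g k m p * G l c p)
      = (\<Sum>l\<in>UNIV. \<Sum>m\<in>UNIV. (\<Sum>k\<in>UNIV. G b k p * g k m p) * \<Gamma> a l m p * G l c p)"
  proof -
    have "(\<Sum>k\<in>UNIV. \<Sum>l\<in>UNIV. \<Sum>m\<in>UNIV. G b k p * \<Gamma> a l m p * g k m p * G l c p)
      = (\<Sum>l\<in>UNIV. \<Sum>k\<in>UNIV. \<Sum>m\<in>UNIV. G b k p * \<Gamma> a l m p * g k m p * G l c p)"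
      by (rule sum.swap)
    also have "\<dots> = (\<Sum>l\<in>UNIV. \<Sum>m\<in>UNIV. \<Sum>k\<in>UNIV. G b k p * \<Gamma> a l m p * g k m p * G l c p)"
      by (rule sum.cong[OF refl], rule sum.swap)
    also have "\<dots> = (\<Sum>l\<in>UNIV. \<Sum>m\<in>UNIV. (\<Sum>k\<in>UNIV. G b k p * g k m p) * \<Gamma> a l m p * G l c p)"
      by (simp add: sum_distrib_right sum_distrib_left mult_ac)
    finally show ?thesis .
  qed
  also have "\<dots> = (\<Sum>m\<in>UNIV. \<Gamma> a m b p * G m c p)"
    by (simp add: ginv_metric[OF p] christoffel_sym[OF p, of a] mult.assoc)
  finally show ?thesis by simp
qed

lemma smooth_dtil [simp]: "smooth_on \<Omega> f \<Longrightarrow> smooth_on \<Omega> (dtil a f)"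
  by (rule smooth_on_dtil)

lemma smooth_metric_data [simp]: "smooth_on \<Omega> (g i j)" "smooth_on \<Omega> (G i j)" "smooth_on \<Omega> (\<Gamma> i j k)"
  "smooth_on \<Omega> (\<lambda>q. c)"
  by (auto intro: smooth_metric smooth_ginv smooth_christoffel smooth_on_const[OF opn])

lemma smooth_arith [simp]:
  "smooth_on \<Omega> f \<Longrightarrow> smooth_on \<Omega> h \<Longrightarrow> smooth_on \<Omega> (\<lambda>q. f q * h q)"
  "smooth_on \<Omega> f \<Longrightarrow> smooth_on \<Omega> h \<Longrightarrow> smooth_on \<Omega> (\<lambda>q. f q + h q)"
  "smooth_on \<Omega> f \<Longrightarrow> smooth_on \<Omega> h \<Longrightarrow> smooth_on \<Omega> (\<lambda>q. f q - h q)"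
  "smooth_on \<Omega> f \<Longrightarrow> smooth_on \<Omega> (\<lambda>q. - f q)"
  "(\<And>m. smooth_on \<Omega> (F m)) \<Longrightarrow> smooth_on \<Omega> (\<lambda>q. \<Sum>m\<in>UNIV. (F :: 'j::finite \<Rightarrow> _) m q)"
  by (auto intro: smooth_on_mult smooth_on_add smooth_on_diff smooth_on_minus smooth_on_sum opn)

lemma dtil_arith:
  "p \<in> \<Omega> \<Longrightarrow> smooth_on \<Omega> f \<Longrightarrow> smooth_on \<Omega> h \<Longrightarrow>
    dtil a (\<lambda>q. f q * h q) p = dtil a f p * h p + f p * dtil a h p"
  "p \<in> \<Omega> \<Longrightarrow> smooth_on \<Omega> f \<Longrightarrow> smooth_on \<Omega> h \<Longrightarrow>
    dtil a (\<lambda>q. f q + h q) p = dtil a f p + dtil a h p"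
  "p \<in> \<Omega> \<Longrightarrow> smooth_on \<Omega> f \<Longrightarrow> smooth_on \<Omega> h \<Longrightarrow>
    dtil a (\<lambda>q. f q - h q) p = dtil a f p - dtil a h p"
  "p \<in> \<Omega> \<Longrightarrow> smooth_on \<Omega> f \<Longrightarrow> dtil a (\<lambda>q. - f q) p = - dtil a f p"
  "p \<in> \<Omega> \<Longrightarrow> (\<And>m. smooth_on \<Omega> (F m)) \<Longrightarrow>
    dtil a (\<lambda>q. \<Sum>m\<in>UNIV. (F :: 'j::finite \<Rightarrow> _) m q) p = (\<Sum>m\<in>UNIV. dtil a (F m) p)"
  by (auto intro!: dtil_mult dtil_add dtil_diff dtil_minus dtil_sum
      smooth_on_imp_differentiable[where S=\<Omega>])

lemma dtil_cong_cmult: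
  assumes "p \<in> \<Omega>" "\<And>q. q \<in> \<Omega> \<Longrightarrow> f q = c * h q" "smooth_on \<Omega> h"
  shows "dtil a f p = c * dtil a h p"
proof -
  have "dtil a f p = dtil a (\<lambda>q. c * h q) p"
    using assms(1,2) by (rule dtil_cong_open[OF opn])
  also have "\<dots> = c * dtil a h p"
    using assms(1,3) by (intro dtil_cmult smooth_on_imp_differentiable[where S=\<Omega>])
  finally show ?thesis .
qed

lemma dtil_minus_half: "p \<in> \<Omega> \<Longrightarrow> smooth_on \<Omega> f \<Longrightarrow> dtil a (\<lambda>q. - (f q / 2)) p = - (dtil a f p / 2)"
proof -
  assume "p \<in> \<Omega>" "smooth_on \<Omega> f"
  then have "dtil a (\<lambda>q. (- 1/2) * f q) p = (- 1/2) * dtil a f p"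
    by (intro dtil_cmult smooth_on_imp_differentiable[where S=\<Omega>])
  then show ?thesis by simp
qed

lemma curv_christoffel_eq: "curv dx \<Gamma> b c d e = (\<lambda>q. dtil (Some b) (\<Gamma> c d e) q - dtil (Some c) (\<Gamma> b d e) q
   + (\<Sum>m\<in>UNIV. \<Gamma> c d m q * \<Gamma> b m e q - \<Gamma> b d m q * \<Gamma> c m e q))"
  by (rule ext) (simp add: curv_def dx_eq_dtil)

lemma smooth_curv [simp]: "smooth_on \<Omega> (curv dx \<Gamma> b c d e)"
  unfolding curv_christoffel_eq by simp

lemma Ric_eq: "Ric g j k = (\<lambda>q. \<Sum>r\<in>UNIV. curv dx \<Gamma> r j k r q)"
  by (rule ext) (simp add: Ric_def ricci_def)

lemma smooth_Ric [simp]: "smooth_on \<Omega> (Ric g j k)"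
  unfolding Ric_eq by simp

lemma Ric_up_eq: "Ric_up g i k = (\<lambda>q. \<Sum>j\<in>UNIV. G k j q * Ric g i j q)"
  by (rule ext) (simp add: Ric_up_def)

lemma smooth_Ric_up [simp]: "smooth_on \<Omega> (Ric_up g i k)"
  unfolding Ric_up_eq by simp

lemma scal_eq: "scal g = (\<lambda>q. \<Sum>j\<in>UNIV. \<Sum>k\<in>UNIV. G j k q * Ric g j k q)"
  by (rule ext) (simp add: scal_def)

lemma smooth_scal [simp]: "smooth_on \<Omega> (scal g)"
  unfolding scal_eq by simp

lemma grad_scal_eq: "grad_scal g k = (\<lambda>q. \<Sum>l\<in>UNIV. G k l q * dtil (Some l) (scal g) q)"
  by (rule ext) (simp add: grad_scal_def dx_eq_dtil)

lemma smooth_grad_scal [simp]: "smooth_on \<Omega> (grad_scal g k)"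
  unfolding grad_scal_eq by simp

abbreviation "\<Gamma>_at p \<equiv> \<lambda>i j k. \<Gamma> i j k p"
abbreviation "d\<Gamma>_at p \<equiv> \<lambda>a i j k. dtil (Some a) (\<Gamma> i j k) p"
abbreviation "dd\<Gamma>_at p \<equiv> \<lambda>a b i j k. dtil (Some a) (dtil (Some b) (\<Gamma> i j k)) p"
abbreviation "ginv_at p \<equiv> \<lambda>i j. G i j p"
abbreviation "metric_at p \<equiv> \<lambda>i j. g i j p"
abbreviation "Ric_at p \<equiv> ricci_jet (\<Gamma>_at p) (d\<Gamma>_at p)"
abbreviation "dRic_at p \<equiv> dricci_jet (\<Gamma>_at p) (d\<Gamma>_at p) (dd\<Gamma>_at p)"
abbreviation "nabla_Ric_at p \<equiv> nabla2_jet (\<Gamma>_at p) (Ric_at p) (dRic_at p)"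

lemma curv_eq_jet: "curv dx \<Gamma> b c d e p = curv_jet (\<Gamma>_at p) (d\<Gamma>_at p) b c d e"
  by (simp add: curv_def curv_jet_def dx_eq_dtil)

lemma dtil_curv_eq_jet: "p \<in> \<Omega> \<Longrightarrow> dtil (Some a) (curv dx \<Gamma> b c d e) p
    = dcurv_jet (\<Gamma>_at p) (d\<Gamma>_at p) (dd\<Gamma>_at p) a b c d e"
  unfolding curv_christoffel_eq dcurv_jet_def
  by (simp add: dtil_arith sum_subtractf sum.distrib algebra_simps)

lemma Ric_eq_jet: "Ric g j k p = Ric_at p j k"
  by (simp add: Ric_eq ricci_jet_def curv_eq_jet)

lemma dtil_Ric_eq_jet: "p \<in> \<Omega> \<Longrightarrow> dtil (Some a) (Ric g j k) p = dRic_at p a j k"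
  unfolding Ric_eq dricci_jet_def by (simp add: dtil_arith dtil_curv_eq_jet)

lemma dtil_ginv_eq_jet: "p \<in> \<Omega> \<Longrightarrow> dtil (Some a) (G b c) p = dginv_jet (\<Gamma>_at p) (ginv_at p) a b c"
  unfolding dginv_jet_def by (rule ginv_compatible)

lemma Ric_up_eq_jet: "Ric_up g l k p = raise_jet (ginv_at p) (Ric_at p) l k"
  by (simp add: Ric_up_def raise_jet_def Ric_eq_jet)

lemma dtil_Ric_up_eq_jet: "p \<in> \<Omega> \<Longrightarrow>
   dtil (Some a) (Ric_up g l k) p = draise_jet (\<Gamma>_at p) (ginv_at p) (Ric_at p) (dRic_at p) a l k"
  unfolding Ric_up_eq draise_jet_def
  by (simp add: dtil_arith)
     (simp add: dtil_ginv_eq_jet dtil_Ric_eq_jet Ric_eq_jet)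

lemma dtil_scal_eq_jet: "p \<in> \<Omega> \<Longrightarrow>
   dtil (Some c) (scal g) p = dtrace_jet (\<Gamma>_at p) (ginv_at p) (Ric_at p) (dRic_at p) c"
  unfolding scal_eq dtrace_jet_def
  by (simp add: dtil_arith)
     (simp add: dtil_ginv_eq_jet dtil_Ric_eq_jet Ric_eq_jet)

lemma christoffel_jet_sym: "p \<in> \<Omega> \<Longrightarrow> \<Gamma>_at p i j k = \<Gamma>_at p j i k"
  by (rule christoffel_sym)

lemma dchristoffel_jet_sym: "p \<in> \<Omega> \<Longrightarrow> d\<Gamma>_at p a i j k = d\<Gamma>_at p a j i k"
  by (rule dtil_cong_open[OF opn]) (auto intro: christoffel_sym)

lemma ddchristoffel_jet_sym: "p \<in> \<Omega> \<Longrightarrow> dd\<Gamma>_at p a b i j k = dd\<Gamma>_at p b a i j k"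
  by (rule dtil_commute[OF smooth_christoffel])

lemma ddtil_metric_eq_jet: assumes p: "p \<in> \<Omega>"
  shows "dtil (Some b) (dtil (Some c) (g d e)) p = ddmetric_jet (\<Gamma>_at p) (d\<Gamma>_at p) (metric_at p) b c d e"
proof -
  have "dtil (Some b) (dtil (Some c) (g d e)) p
     = dtil (Some b) (\<lambda>q. (\<Sum>m\<in>UNIV. \<Gamma> c d m q * g m e q) + (\<Sum>m\<in>UNIV. \<Gamma> c e m q * g d m q)) p"
    by (rule dtil_cong_open[OF opn p]) (rule metric_compatible)
  also have "\<dots> = ddmetric_jet (\<Gamma>_at p) (d\<Gamma>_at p) (metric_at p) b c d e"
    unfolding ddmetric_jet_def dmetric_jet_def
    by (simp add: dtil_arith sum.distrib p)
       (simp add: metric_compatible[OF p])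
  finally show ?thesis .
qed

lemma lowered_curv_antisym: assumes p: "p \<in> \<Omega>"
  shows "(\<Sum>m\<in>UNIV. g e m p * curv_jet (\<Gamma>_at p) (d\<Gamma>_at p) b c d m) + (\<Sum>m\<in>UNIV. g d m p * curv_jet (\<Gamma>_at p) (d\<Gamma>_at p) b c e m)
      = 0"
proof (rule lowered_curv_jet_antisym[where C="\<Gamma>_at p" and g="metric_at p"])
  show "\<And>i j k. \<Gamma>_at p i j k = \<Gamma>_at p j i k" using christoffel_jet_sym[OF p] .
  show "\<And>i j. metric_at p i j = metric_at p j i" using metric_sym[OF p] .
  show "ddmetric_jet (\<Gamma>_at p) (d\<Gamma>_at p) (metric_at p) b c d e
      = ddmetric_jet (\<Gamma>_at p) (d\<Gamma>_at p) (metric_at p) c b d e"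
    using ddtil_metric_eq_jet[OF p, of b c d e] ddtil_metric_eq_jet[OF p, of c b d e] dtil_commute[OF smooth_metric p] by metis
qed

lemma ginv_curv_eq_Ric_up: assumes p: "p \<in> \<Omega>"
  shows "ginv_curv_jet (\<Gamma>_at p) (d\<Gamma>_at p) (ginv_at p) c a = - raise_jet (ginv_at p) (Ric_at p) c a"
  unfolding ginv_curv_jet_def raise_jet_def ricci_jet_def
  by (rule ginv_curv_antisym_contract[where g="metric_at p"])
     (use ginv_metric[OF p] lowered_curv_antisym[OF p] in auto)

lemma dtil_ginv_curv_eq_Ric_up: assumes p: "p \<in> \<Omega>"
  shows "dginv_curv_jet (\<Gamma>_at p) (d\<Gamma>_at p) (dd\<Gamma>_at p) (ginv_at p) a' c a
    = - draise_jet (\<Gamma>_at p) (ginv_at p) (Ric_at p) (dRic_at p) a' c a"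
proof -
  have "dtil (Some a') (\<lambda>q. \<Sum>b\<in>UNIV. \<Sum>d\<in>UNIV. G b d q * curv dx \<Gamma> b c d a q) p
      = dtil (Some a') (\<lambda>q. - Ric_up g c a q) p"
    by (rule dtil_cong_open[OF opn p])
       (simp add: ginv_curv_eq_Ric_up[unfolded ginv_curv_jet_def] curv_eq_jet Ric_up_eq_jet)
  moreover have "dtil (Some a') (\<lambda>q. \<Sum>b\<in>UNIV. \<Sum>d\<in>UNIV. G b d q * curv dx \<Gamma> b c d a q) p
      = dginv_curv_jet (\<Gamma>_at p) (d\<Gamma>_at p) (dd\<Gamma>_at p) (ginv_at p) a' c a"
    unfolding dginv_curv_jet_def
    by (simp add: dtil_arith p)
       (simp add: dtil_ginv_eq_jet p dtil_curv_eq_jet curv_eq_jet)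
  moreover have "dtil (Some a') (\<lambda>q. - Ric_up g c a q) p
      = - draise_jet (\<Gamma>_at p) (ginv_at p) (Ric_at p) (dRic_at p) a' c a"
    by (simp add: dtil_arith p dtil_Ric_up_eq_jet)
  ultimately show ?thesis by simp
qed

lemma contracted_bianchi_jet_at:
  assumes p: "p \<in> \<Omega>"
  shows "2 * div_raise_jet (\<Gamma>_at p) (ginv_at p) (Ric_at p) (dRic_at p) l
    = dtrace_jet (\<Gamma>_at p) (ginv_at p) (Ric_at p) (dRic_at p) l"
  by (rule contracted_bianchi_jet)
    (auto intro: christoffel_jet_sym[OF p] dchristoffel_jet_sym[OF p] ddchristoffel_jet_sym[OF p]
      ginv_curv_eq_Ric_up[OF p] dtil_ginv_curv_eq_Ric_up[OF p])

lemma contracted_bianchi: assumes p: "p \<in> \<Omega>"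
  shows "(\<Sum>r\<in>UNIV. dtil (Some r) (Ric_up g l r) p + (\<Sum>m\<in>UNIV. Ric_up g l m p * \<Gamma> r m r p)
           - (\<Sum>m\<in>UNIV. Ric_up g r m p * \<Gamma> l m r p)) = 1/2 * dtil (Some l) (scal g) p"
  using contracted_bianchi_jet_at[OF p, of l] unfolding div_raise_jet_def
  by (simp add: dtil_Ric_up_eq_jet[OF p] Ric_up_eq_jet dtil_scal_eq_jet[OF p])

end
section \<open>Ricci flow in a chart\<close>

locale ricci_flow_chart = riemannian_chart +
  assumes flow: "p \<in> \<Omega> \<Longrightarrow> dt (g i j) p = -2 * Ric g i j p"
begin

text \<open>The flow equation makes the symmetry of the Ricci tensor immediate.\<close>

lemma Ric_sym: "p \<in> \<Omega> \<Longrightarrow> Ric g i j p = Ric g j i p"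
proof -
  assume p: "p \<in> \<Omega>"
  have "dt (g i j) p = dt (g j i) p" unfolding dt_eq_dtil by (rule dtil_metric_sym[OF p])
  then show ?thesis using flow[OF p, of i j] flow[OF p, of j i] by simp
qed

lemma ricci_jet_sym: "p \<in> \<Omega> \<Longrightarrow> Ric_at p i j = Ric_at p j i"
  using Ric_sym[of p i j] by (simp add: Ric_eq_jet)

lemma dricci_jet_sym: "p \<in> \<Omega> \<Longrightarrow> dRic_at p a i j = dRic_at p a j i"
proof -
  assume p: "p \<in> \<Omega>"
  have "dtil (Some a) (Ric g i j) p = dtil (Some a) (Ric g j i) p"
    by (rule dtil_cong_open[OF opn p]) (rule Ric_sym)
  then show ?thesis using dtil_Ric_eq_jet[OF p] by simp
qed

lemma nabla_Ric_at_sym: "p \<in> \<Omega> \<Longrightarrow> nabla_Ric_at p a i j = nabla_Ric_at p a j i"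
  by (rule nabla2_jet_sym) (auto intro: ricci_jet_sym dricci_jet_sym)

lemma dt_ginv: "p \<in> \<Omega> \<Longrightarrow> dtil None (G i j) p = 2 * (\<Sum>k\<in>UNIV. \<Sum>l\<in>UNIV. G i k p * Ric_at p k l * G l j p)"
proof -
  assume p: "p \<in> \<Omega>"
  have "dtil None (G i j) p = - (\<Sum>k\<in>UNIV. \<Sum>l\<in>UNIV. G i k p * dtil None (g k l) p * G l j p)"
    by (rule dtil_ginv[OF p])
  also have "\<dots> = - (\<Sum>k\<in>UNIV. \<Sum>l\<in>UNIV. G i k p * (-2 * Ric g k l p) * G l j p)"
    using flow[OF p] by (simp add: dt_eq_dtil)
  finally show ?thesis by (simp add: Ric_eq_jet sum_distrib_left sum_negf mult_ac)
qed

lemma dt_dtil_metric: "p \<in> \<Omega> \<Longrightarrow> dtil None (dtil (Some i) (g j l)) p = -2 * dRic_at p i j l"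
proof -
  assume p: "p \<in> \<Omega>"
  have "dtil None (dtil (Some i) (g j l)) p = dtil (Some i) (dtil None (g j l)) p"
    by (rule dtil_commute[OF smooth_metric p])
  also have "\<dots> = dtil (Some i) (\<lambda>q. -2 * Ric g j l q) p"
    by (rule dtil_cong_open[OF opn p]) (simp add: flow dt_eq_dtil[symmetric])
  also have "\<dots> = -2 * dRic_at p i j l"
    by (simp add: dtil_arith p dtil_Ric_eq_jet)
  finally show ?thesis .
qed

lemma dt_christoffel: assumes p: "p \<in> \<Omega>"
  shows "dtil None (\<Gamma> i j k) p
      = - (\<Sum>l\<in>UNIV. G k l p * (nabla_Ric_at p i j l + nabla_Ric_at p j i l - nabla_Ric_at p l i j))"
proof -
  let ?Y = "\<lambda>l. dtil (Some i) (g j l) p + dtil (Some j) (g i l) p - dtil (Some l) (g i j) p"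
  let ?X = "Ric_at p" and ?dX = "dRic_at p"
  have "dtil None (\<Gamma> i j k) p = 1/2 * dtil None (\<lambda>q. \<Sum>l\<in>UNIV. G k l q *
      (dtil (Some i) (g j l) q + dtil (Some j) (g i l) q - dtil (Some l) (g i j) q)) p"
    using p by (rule dtil_cong_cmult) (simp_all add: christoffel_dtil)
  also have "dtil None (\<lambda>q. \<Sum>l\<in>UNIV. G k l q *
      (dtil (Some i) (g j l) q + dtil (Some j) (g i l) q - dtil (Some l) (g i j) q)) p
      = (\<Sum>l\<in>UNIV. (2 * (\<Sum>a\<in>UNIV. \<Sum>b\<in>UNIV. G k a p * ?X a b * G b l p)) * ?Y l
            + G k l p * (-2 * ?dX i j l + -2 * ?dX j i l - -2 * ?dX l i j))"
    by (simp add: dtil_arith p) (simp add: dt_ginv[OF p] dt_dtil_metric[OF p])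
  also have "1/2 * \<dots>
      = - (\<Sum>l\<in>UNIV. G k l p * (nabla_Ric_at p i j l + nabla_Ric_at p j i l - nabla_Ric_at p l i j))"
  proof (rule dt_christoffel_jet)
    show "\<And>i j k. \<Gamma>_at p i j k = \<Gamma>_at p j i k" using christoffel_jet_sym[OF p] .
    show "\<And>i j. ?X i j = ?X j i" using ricci_jet_sym[OF p] .
    show "\<And>b. (\<Sum>l\<in>UNIV. G b l p * ?Y l) = 2 * \<Gamma>_at p i j b"
      using christoffel_dtil[of i j _ p] by (simp add: mult.commute)
  qed
  finally show ?thesis .
qed

lemma ginv_nabla_Ric_swap: assumes p: "p \<in> \<Omega>"
  shows "(\<Sum>r\<in>UNIV. \<Sum>q\<in>UNIV. G r q p * nabla_Ric_at p q r l)
      = (\<Sum>r\<in>UNIV. \<Sum>q\<in>UNIV. G r q p * nabla_Ric_at p r q l)"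
proof -
  have "(\<Sum>r\<in>UNIV. \<Sum>q\<in>UNIV. G r q p * nabla_Ric_at p q r l) = (\<Sum>q\<in>UNIV. \<Sum>r\<in>UNIV. G r q p * nabla_Ric_at p q r l)"
    by (rule sum.swap)
  also have "\<dots> = (\<Sum>q\<in>UNIV. \<Sum>r\<in>UNIV. G q r p * nabla_Ric_at p q r l)"
    using ginv_sym[OF p] by simp
  finally show ?thesis .
qed

lemma dt_christoffel_trace: assumes p: "p \<in> \<Omega>"
  shows "(\<Sum>r\<in>UNIV. dtil None (\<Gamma> r l r) p) = - dtil (Some l) (scal g) p"
proof -
  have e: "(\<Sum>r\<in>UNIV. dtil None (\<Gamma> r l r) p)
     = - ((\<Sum>r\<in>UNIV. \<Sum>q\<in>UNIV. G r q p * nabla_Ric_at p r l q)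
         + (\<Sum>r\<in>UNIV. \<Sum>q\<in>UNIV. G r q p * nabla_Ric_at p l r q)
         - (\<Sum>r\<in>UNIV. \<Sum>q\<in>UNIV. G r q p * nabla_Ric_at p q r l))"
    by (simp add: dt_christoffel[OF p] sum_negf algebra_simps sum.distrib sum_subtractf)
  have a: "(\<Sum>r\<in>UNIV. \<Sum>q\<in>UNIV. G r q p * nabla_Ric_at p r l q)
      = (\<Sum>r\<in>UNIV. \<Sum>q\<in>UNIV. G r q p * nabla_Ric_at p q r l)"
    unfolding ginv_nabla_Ric_swap[OF p] using nabla_Ric_at_sym[OF p] by simp
  have b: "(\<Sum>r\<in>UNIV. \<Sum>q\<in>UNIV. G r q p * nabla_Ric_at p l r q) = dtil (Some l) (scal g) p"
    by (simp add: trace_nabla2_jet dtil_scal_eq_jet[OF p])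
  show ?thesis unfolding e a b by simp
qed

lemma ginv_nabla_Ric_koszul_trace:
  assumes p: "p \<in> \<Omega>"
  shows "(\<Sum>j\<in>UNIV. \<Sum>k\<in>UNIV. G j k p * (nabla_Ric_at p j k l + nabla_Ric_at p k j l - nabla_Ric_at p l j k)) = 0"
proof -
  have "(\<Sum>j\<in>UNIV. \<Sum>k\<in>UNIV. G j k p * nabla_Ric_at p j k l)
      = div_raise_jet (\<Gamma>_at p) (ginv_at p) (Ric_at p) (dRic_at p) l"
    unfolding ginv_nabla2_jet_eq_div[OF christoffel_jet_sym[OF p], symmetric]
    using nabla_Ric_at_sym[OF p] by simp
  moreover have "(\<Sum>j\<in>UNIV. \<Sum>k\<in>UNIV. G j k p * nabla_Ric_at p l j k)
      = dtrace_jet (\<Gamma>_at p) (ginv_at p) (Ric_at p) (dRic_at p) l"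
    unfolding trace_nabla2_jet ..
  ultimately show ?thesis
    using contracted_bianchi_jet_at[OF p, of l] ginv_nabla_Ric_swap[OF p, of l]
    by (simp add: algebra_simps sum.distrib sum_subtractf)
qed

lemma ginv_dt_christoffel:
  assumes p: "p \<in> \<Omega>"
  shows "(\<Sum>j\<in>UNIV. \<Sum>k\<in>UNIV. G j k p * dtil None (\<Gamma> j k r) p) = 0"
proof -
  let ?Z = "\<lambda>j k l. nabla_Ric_at p j k l + nabla_Ric_at p k j l - nabla_Ric_at p l j k"
  have "(\<Sum>j\<in>UNIV. \<Sum>k\<in>UNIV. G j k p * dtil None (\<Gamma> j k r) p)
      = - (\<Sum>j\<in>UNIV. \<Sum>k\<in>UNIV. \<Sum>l\<in>UNIV. G j k p * G r l p * ?Z j k l)"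
    by (simp add: dt_christoffel[OF p] sum_negf sum_distrib_left mult.assoc)
  also have "(\<Sum>j\<in>UNIV. \<Sum>k\<in>UNIV. \<Sum>l\<in>UNIV. G j k p * G r l p * ?Z j k l)
      = (\<Sum>l\<in>UNIV. \<Sum>j\<in>UNIV. \<Sum>k\<in>UNIV. G j k p * G r l p * ?Z j k l)"
    unfolding sum3_eq_sum_tuple
    by (rule sum.reindex_bij_witness[where i="\<lambda>(l,j,k). (j,k,l)" and j="\<lambda>(j,k,l). (l,j,k)"]) auto
  also have "\<dots> = (\<Sum>l\<in>UNIV. G r l p * (\<Sum>j\<in>UNIV. \<Sum>k\<in>UNIV. G j k p * ?Z j k l))"
    by (simp add: sum_distrib_left mult_ac)
  finally show ?thesis by (simp add: ginv_nabla_Ric_koszul_trace[OF p])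
qed

abbreviation "dt\<Gamma>_at p \<equiv> \<lambda>i j k. dtil None (\<Gamma> i j k) p"
abbreviation "ddt\<Gamma>_at p \<equiv> \<lambda>a i j k. dtil (Some a) (dtil None (\<Gamma> i j k)) p"
abbreviation "dscal p l \<equiv> dtil (Some l) (scal g) p"
abbreviation "ddscal p i l \<equiv> dtil (Some i) (dtil (Some l) (scal g)) p"

lemma dt_Ric_palatini: assumes p: "p \<in> \<Omega>"
  shows "dtil None (Ric g j k) p = palatini_jet_variation (\<Gamma>_at p) (dt\<Gamma>_at p) (ddt\<Gamma>_at p) j k"
proof -
  have s: "dtil None (dtil (Some a) (\<Gamma> i j k)) p = dtil (Some a) (dtil None (\<Gamma> i j k)) p" for a i j k
    by (rule dtil_commute[OF smooth_christoffel p])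
  show ?thesis
    unfolding Ric_eq curv_christoffel_eq palatini_jet_variation_def
    by (simp add: dtil_arith p) (simp add: s algebra_simps sum.distrib sum_subtractf)
qed

text \<open>In the contracted Palatini identity both divergence terms vanish, because
  \<open>g\<^sup>j\<^sup>k \<partial>_t \<Gamma>\<^sup>r_jk = 0\<close> and \<open>\<partial>_t \<Gamma>\<^sup>r_rk = -\<partial>_k R\<close>.\<close>

lemma ginv_dt_Ric:
  assumes p: "p \<in> \<Omega>"
  shows "(\<Sum>j\<in>UNIV. \<Sum>k\<in>UNIV. G j k p * dtil None (Ric g j k) p)
    = (\<Sum>j\<in>UNIV. \<Sum>k\<in>UNIV. G j k p * (ddscal p j k - (\<Sum>m\<in>UNIV. \<Gamma> j k m p * dscal p m)))"
proof -
  have div_zero: "(\<Sum>j\<in>UNIV. \<Sum>k\<in>UNIV. dginv_jet (\<Gamma>_at p) (ginv_at p) r j k * dt\<Gamma>_at p j k r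
      + G j k p * ddt\<Gamma>_at p r j k r) = 0" for r
  proof -
    have "(\<Sum>j\<in>UNIV. \<Sum>k\<in>UNIV. dginv_jet (\<Gamma>_at p) (ginv_at p) r j k * dt\<Gamma>_at p j k r
        + G j k p * ddt\<Gamma>_at p r j k r)
        = dtil (Some r) (\<lambda>q. \<Sum>j\<in>UNIV. \<Sum>k\<in>UNIV. G j k q * dtil None (\<Gamma> j k r) q) p"
      by (simp add: dtil_arith p) (simp add: dtil_ginv_eq_jet[OF p])
    also have "\<dots> = dtil (Some r) (\<lambda>q. 0) p"
      by (rule dtil_cong_open[OF opn p]) (rule ginv_dt_christoffel)
    finally show ?thesis by simp
  qed
  have trace_deriv: "(\<Sum>r\<in>UNIV. ddt\<Gamma>_at p j r k r) = - ddscal p j k" for j k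
  proof -
    have "(\<Sum>r\<in>UNIV. ddt\<Gamma>_at p j r k r) = dtil (Some j) (\<lambda>q. \<Sum>r\<in>UNIV. dtil None (\<Gamma> r k r) q) p"
      by (simp add: dtil_arith p)
    also have "\<dots> = dtil (Some j) (\<lambda>q. - dtil (Some k) (scal g) q) p"
      by (rule dtil_cong_open[OF opn p]) (rule dt_christoffel_trace)
    finally show ?thesis by (simp add: dtil_arith p)
  qed
  show ?thesis
    unfolding dt_Ric_palatini[OF p] palatini_jet[OF christoffel_jet_sym[OF p]] div_zero
      ginv_dt_christoffel[OF p] dt_christoffel_trace[OF p] trace_deriv
    by (simp add: sum_negf sum_subtractf algebra_simps)
qed

lemma dt_scal:
  assumes p: "p \<in> \<Omega>"
  shows "dtil None (scal g) p = (\<Sum>r\<in>UNIV. dtil (Some r) (grad_scal g r) p)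
     + (\<Sum>r\<in>UNIV. \<Sum>m\<in>UNIV. grad_scal g m p * \<Gamma> r m r p)
     + 2 * (\<Sum>r\<in>UNIV. \<Sum>m\<in>UNIV. Ric_up g r m p * Ric_up g m r p)"
proof -
  have "dtil None (scal g) p = (\<Sum>j\<in>UNIV. \<Sum>k\<in>UNIV. dtil None (G j k) p * Ric g j k p)
      + (\<Sum>j\<in>UNIV. \<Sum>k\<in>UNIV. G j k p * dtil None (Ric g j k) p)"
    unfolding scal_eq by (simp add: dtil_arith p sum.distrib)
  also have "\<dots> = (\<Sum>j\<in>UNIV. \<Sum>k\<in>UNIV. (2 * (\<Sum>a\<in>UNIV. \<Sum>b\<in>UNIV. G j a p * Ric_at p a b * G b k p))
        * Ric_at p j k)
      + (\<Sum>j\<in>UNIV. \<Sum>k\<in>UNIV. G j k p * (ddscal p j k - (\<Sum>m\<in>UNIV. \<Gamma> j k m p * dscal p m)))"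
    by (simp add: ginv_dt_Ric[OF p] dt_ginv[OF p] Ric_eq_jet)
  also have "(\<Sum>j\<in>UNIV. \<Sum>k\<in>UNIV. G j k p * (ddscal p j k - (\<Sum>m\<in>UNIV. \<Gamma> j k m p * dscal p m)))
      = (\<Sum>r\<in>UNIV. dtil (Some r) (grad_scal g r) p) + (\<Sum>r\<in>UNIV. \<Sum>m\<in>UNIV. grad_scal g m p * \<Gamma> r m r p)"
    unfolding laplacian_jet_divergence_form grad_scal_eq
    by (simp add: dtil_arith p) (simp add: dtil_ginv_eq_jet[OF p])
  finally show ?thesis
    unfolding ginv_square_trace[OF ricci_jet_sym[OF p]] Ric_up_eq_jet by simp
qed

end

section \<open>The degenerate metric and connection at \<open>\<tau> = 0\<close>\<close>

context ricci_flow_chart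
begin

abbreviation "Gtil0 \<equiv> Gtil g 0"
abbreviation "Rictil0 \<equiv> Rictil g 0"
abbreviation "gtil0 \<equiv> gtil g 0"
abbreviation "nabla_Rictil0 \<equiv> covd2 dtil Gtil0 Rictil0"

text \<open>In the lemma names below, \<open>s\<close> stands for a spatial index \<open>Some i\<close> and \<open>0\<close> for the time
  index \<open>None\<close>.\<close>

lemma Gtil0_simps:
  "Gtil0 a b None = (\<lambda>q. 0)"
  "Gtil0 (Some i) (Some j) (Some k) = \<Gamma> i j k"
  "Gtil0 (Some i) None (Some k) = (\<lambda>q. - Ric_up g i k q)"
  "Gtil0 None (Some i) (Some k) = (\<lambda>q. - Ric_up g i k q)"
  "Gtil0 None None (Some k) = (\<lambda>q. - (1/2) * grad_scal g k q)"
  by (auto simp: Gtil_def fun_eq_iff split: option.splits)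

lemma gtil0_simps:
  "gtil0 (Some i) (Some j) = G i j"
  "gtil0 None b = (\<lambda>q. 0)"
  "gtil0 a None = (\<lambda>q. 0)"
  by (auto simp: gtil_def fun_eq_iff split: option.splits)

lemma Rictil0_expand:
  "Rictil0 j k q = (\<Sum>r\<in>UNIV. dtil (Some r) (Gtil0 j k (Some r)) q - dtil j (Gtil0 (Some r) k (Some r)) q
     + (\<Sum>m\<in>UNIV. Gtil0 j k (Some m) q * Gtil0 (Some r) (Some m) (Some r) q
        - Gtil0 (Some r) k (Some m) q * Gtil0 j (Some m) (Some r) q))"
  unfolding Rictil_def ricci_def curv_def sum_UNIV_option by (simp add: Gtil0_simps)

lemma Rictil0_ss: "Rictil0 (Some j) (Some k) q = Ric g j k q"
  unfolding Rictil0_expand by (simp add: Gtil0_simps Ric_def ricci_def curv_def dx_eq_dtil)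

lemma scal_eq_trace_Ric_up: "scal g q = (\<Sum>r\<in>UNIV. Ric_up g r r q)"
  by (simp add: scal_def Ric_up_def)

lemma Rictil0_s0: assumes p: "p \<in> \<Omega>"
  shows "Rictil0 (Some l) None p = 1/2 * dtil (Some l) (scal g) p"
proof -
  have sc: "dtil (Some l) (\<lambda>q. \<Sum>r\<in>UNIV. Ric_up g r r q) p = dtil (Some l) (scal g) p"
    by (simp add: scal_eq_trace_Ric_up[symmetric])
  have "Rictil0 (Some l) None p
      = - (\<Sum>r\<in>UNIV. dtil (Some r) (Ric_up g l r) p + (\<Sum>m\<in>UNIV. Ric_up g l m p * \<Gamma> r m r p)
           - (\<Sum>m\<in>UNIV. Ric_up g r m p * \<Gamma> l m r p)) + dtil (Some l) (\<lambda>q. \<Sum>r\<in>UNIV. Ric_up g r r q) p"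
    unfolding Rictil0_expand
    by (simp add: Gtil0_simps dtil_arith p)
       (simp add: algebra_simps sum.distrib sum_subtractf sum_negf)
  then show ?thesis unfolding sc contracted_bianchi[OF p] by simp
qed

lemma Rictil0_0s: assumes p: "p \<in> \<Omega>"
  shows "Rictil0 None (Some l) p = 1/2 * dtil (Some l) (scal g) p"
proof -
  have sw: "(\<Sum>r\<in>UNIV. \<Sum>m\<in>UNIV. \<Gamma> r l m p * Ric_up g m r p) = (\<Sum>r\<in>UNIV. \<Sum>m\<in>UNIV. Ric_up g r m p * \<Gamma> l m r p)"
  proof -
    have "(\<Sum>r\<in>UNIV. \<Sum>m\<in>UNIV. \<Gamma> r l m p * Ric_up g m r p) = (\<Sum>m\<in>UNIV. \<Sum>r\<in>UNIV. \<Gamma> r l m p * Ric_up g m r p)"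
      by (rule sum.swap)
    then show ?thesis using christoffel_sym[OF p] by (simp add: mult.commute)
  qed
  have "Rictil0 None (Some l) p
      = - (\<Sum>r\<in>UNIV. dtil (Some r) (Ric_up g l r) p + (\<Sum>m\<in>UNIV. Ric_up g l m p * \<Gamma> r m r p)
           - (\<Sum>m\<in>UNIV. Ric_up g r m p * \<Gamma> l m r p)) - (\<Sum>r\<in>UNIV. dtil None (\<Gamma> r l r) p)"
  proof -
    have "Rictil0 None (Some l) p
        = - (\<Sum>r\<in>UNIV. dtil (Some r) (Ric_up g l r) p) - (\<Sum>r\<in>UNIV. dtil None (\<Gamma> r l r) p)
       - (\<Sum>r\<in>UNIV. \<Sum>m\<in>UNIV. Ric_up g l m p * \<Gamma> r m r p) + (\<Sum>r\<in>UNIV. \<Sum>m\<in>UNIV. \<Gamma> r l m p * Ric_up g m r p)"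
      unfolding Rictil0_expand
      by (simp add: Gtil0_simps dtil_arith p)
         (simp add: algebra_simps sum.distrib sum_subtractf sum_negf)
    then show ?thesis unfolding sw by (simp add: sum.distrib sum_subtractf)
  qed
  then show ?thesis unfolding contracted_bianchi[OF p] dt_christoffel_trace[OF p] by simp
qed

lemma Rictil0_00: assumes p: "p \<in> \<Omega>"
  shows "Rictil0 None None p = 1/2 * dtil None (scal g) p"
proof -
  have sc: "dtil None (\<lambda>q. \<Sum>r\<in>UNIV. Ric_up g r r q) p = dtil None (scal g) p"
    by (simp add: scal_eq_trace_Ric_up[symmetric])
  have "Rictil0 None None p = - 1/2 * ((\<Sum>r\<in>UNIV. dtil (Some r) (grad_scal g r) p)
     + (\<Sum>r\<in>UNIV. \<Sum>m\<in>UNIV. grad_scal g m p * \<Gamma> r m r p))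
     + dtil None (\<lambda>q. \<Sum>r\<in>UNIV. Ric_up g r r q) p - (\<Sum>r\<in>UNIV. \<Sum>m\<in>UNIV. Ric_up g r m p * Ric_up g m r p)"
    unfolding Rictil0_expand
    by (simp add: Gtil0_simps dtil_arith dtil_minus_half p)
       (simp add: algebra_simps sum.distrib sum_subtractf sum_negf sum_distrib_left)
  then show ?thesis unfolding sc using dt_scal[OF p] by (simp add: algebra_simps)
qed

lemma nabla_Rictil0_expand:
  "nabla_Rictil0 a b l p = dtil a (Rictil0 b l) p
    - (\<Sum>m\<in>UNIV. Gtil0 a b (Some m) p * Rictil0 (Some m) l p)
    - (\<Sum>m\<in>UNIV. Gtil0 a l (Some m) p * Rictil0 b (Some m) p)"
  unfolding covd2_def sum_UNIV_option by (simp add: Gtil0_simps)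

lemma Rictil0_ss_fun: "Rictil0 (Some j) (Some k) = Ric g j k"
  by (rule ext) (rule Rictil0_ss)

lemma dtil_Rictil0_s0: "p \<in> \<Omega> \<Longrightarrow> dtil a (Rictil0 (Some l) None) p = 1/2 * dtil a (dtil (Some l) (scal g)) p"
  by (rule dtil_cong_cmult) (auto simp: Rictil0_s0)

lemma dtil_Rictil0_0s: "p \<in> \<Omega> \<Longrightarrow> dtil a (Rictil0 None (Some l)) p = 1/2 * dtil a (dtil (Some l) (scal g)) p"
  by (rule dtil_cong_cmult) (auto simp: Rictil0_0s)

lemma dtil_Rictil0_00: "p \<in> \<Omega> \<Longrightarrow> dtil a (Rictil0 None None) p = 1/2 * dtil a (dtil None (scal g)) p"
  by (rule dtil_cong_cmult) (auto simp: Rictil0_00)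

lemma nabla_Rictil0_sss: "p \<in> \<Omega> \<Longrightarrow> nabla_Rictil0 (Some i) (Some j) (Some l) p = nabla_Ric_at p i j l"
  unfolding nabla_Rictil0_expand nabla2_jet_def
  by (simp add: Gtil0_simps Rictil0_ss_fun Rictil0_ss dtil_Ric_eq_jet Ric_eq_jet)

lemma nabla_Rictil0_s0s: "p \<in> \<Omega> \<Longrightarrow> nabla_Rictil0 (Some i) None (Some l) p
   = 1/2 * ddscal p i l + (\<Sum>m\<in>UNIV. Ric_up g i m p * Ric g m l p) - (\<Sum>m\<in>UNIV. \<Gamma> i l m p * (1/2 * dscal p m))"
  unfolding nabla_Rictil0_expand
  by (simp add: Gtil0_simps Rictil0_ss dtil_Rictil0_0s Rictil0_0s sum_negf)

lemma nabla_Rictil0_0ss: "p \<in> \<Omega> \<Longrightarrow> nabla_Rictil0 None (Some i) (Some l) p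
   = dtil None (Ric g i l) p + (\<Sum>m\<in>UNIV. Ric_up g i m p * Ric g m l p)
       + (\<Sum>m\<in>UNIV. Ric_up g l m p * Ric g i m p)"
  unfolding nabla_Rictil0_expand by (simp add: Gtil0_simps Rictil0_ss Rictil0_ss_fun sum_negf)

lemma nabla_Rictil0_ss0: "p \<in> \<Omega> \<Longrightarrow> nabla_Rictil0 (Some l) (Some i) None p
   = 1/2 * ddscal p l i - (\<Sum>m\<in>UNIV. \<Gamma> l i m p * (1/2 * dscal p m)) + (\<Sum>m\<in>UNIV. Ric_up g l m p * Ric g i m p)"
  unfolding nabla_Rictil0_expand
  by (simp add: Gtil0_simps Rictil0_ss dtil_Rictil0_s0 Rictil0_s0 sum_negf)

lemma nabla_Rictil0_00s: "p \<in> \<Omega> \<Longrightarrow> nabla_Rictil0 None None (Some l) p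
   = 1/2 * dtil None (dtil (Some l) (scal g)) p + 1/2 * (\<Sum>m\<in>UNIV. grad_scal g m p * Ric g m l p)
     + (\<Sum>m\<in>UNIV. Ric_up g l m p * (1/2 * dscal p m))"
  unfolding nabla_Rictil0_expand
  by (simp add: Gtil0_simps Rictil0_ss dtil_Rictil0_0s Rictil0_0s sum_negf sum_distrib_left)

lemma nabla_Rictil0_s00: "p \<in> \<Omega> \<Longrightarrow> nabla_Rictil0 (Some l) None None p
   = 1/2 * dtil (Some l) (dtil None (scal g)) p + 2 * (\<Sum>m\<in>UNIV. Ric_up g l m p * (1/2 * dscal p m))"
  unfolding nabla_Rictil0_expand
  by (simp add: Gtil0_simps dtil_Rictil0_00 Rictil0_s0 Rictil0_0s sum_negf)

lemma sum_gtil0_Some: "(\<Sum>l\<in>UNIV. gtil0 (Some k) l p * F l) = (\<Sum>l\<in>UNIV. G k l p * F (Some l))"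
  unfolding sum_UNIV_option by (simp add: gtil0_simps)

lemma dt_gtil0: assumes p: "p \<in> \<Omega>"
  shows "dt (gtil0 a b) p = 2 * (\<Sum>k\<in>UNIV. \<Sum>l\<in>UNIV. gtil0 a k p * gtil0 b l p * Rictil0 k l p)"
proof (cases a)
  case None then show ?thesis by (simp add: gtil0_simps dt_eq_dtil)
next
  case (Some i) note a = this
  show ?thesis
  proof (cases b)
    case None then show ?thesis by (simp add: gtil0_simps dt_eq_dtil)
  next
    case (Some j)
    have "dt (gtil0 a b) p = 2 * (\<Sum>k\<in>UNIV. \<Sum>l\<in>UNIV. G i k p * Ric_at p k l * G l j p)"
      using a Some by (simp add: gtil0_simps dt_eq_dtil dt_ginv[OF p])
    also have "\<dots> = 2 * (\<Sum>k\<in>UNIV. \<Sum>l\<in>UNIV. G i k p * G j l p * Ric g k l p)"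
      by (simp add: Ric_eq_jet ginv_sym[OF p, of _ j] mult_ac)
    also have "\<dots> = 2 * (\<Sum>k\<in>UNIV. \<Sum>l\<in>UNIV. gtil0 a k p * gtil0 b l p * Rictil0 k l p)"
      using a Some by (simp add: sum_UNIV_option gtil0_simps Rictil0_ss)
    finally show ?thesis .
  qed
qed

lemma dt_Ric_up: "p \<in> \<Omega> \<Longrightarrow> dtil None (Ric_up g i k) p
   = (\<Sum>j\<in>UNIV. dtil None (G k j) p * Ric g i j p + G k j p * dtil None (Ric g i j) p)"
  unfolding Ric_up_eq by (simp add: dtil_arith)

lemma dt_minus_Ric_up: assumes p: "p \<in> \<Omega>"
  shows "dtil None (\<lambda>q. - Ric_up g i k q) p = - (\<Sum>l\<in>UNIV. G k l p * (dtil None (Ric g i l) p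
      + 2 * (\<Sum>m\<in>UNIV. Ric_up g i m p * Ric g m l p)))"
proof -
  have dt_ginv_Ric: "(\<Sum>j\<in>UNIV. dtil None (G k j) p * Ric g i j p)
      = 2 * (\<Sum>l\<in>UNIV. G k l p * (\<Sum>m\<in>UNIV. Ric_up g i m p * Ric g m l p))"
    unfolding dt_ginv[OF p] Ric_eq_jet Ric_up_eq_jet raise_jet_def
    by (rule ginv_X_ginv_contract) (rule ricci_jet_sym[OF p])
  have "dtil None (\<lambda>q. - Ric_up g i k q) p
      = - ((\<Sum>j\<in>UNIV. dtil None (G k j) p * Ric g i j p) + (\<Sum>j\<in>UNIV. G k j p * dtil None (Ric g i j) p))"
    by (simp add: dtil_arith p dt_Ric_up[OF p] sum.distrib)
  also have "\<dots> = - (\<Sum>l\<in>UNIV. G k l p * (dtil None (Ric g i l) p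
      + 2 * (\<Sum>m\<in>UNIV. Ric_up g i m p * Ric g m l p)))"
    unfolding dt_ginv_Ric by (simp add: distrib_left sum.distrib sum_distrib_left mult_ac)
  finally show ?thesis .
qed

lemma nabla_Rictil0_koszul_0s:
  assumes p: "p \<in> \<Omega>"
  shows "nabla_Rictil0 None (Some i) (Some l) p + nabla_Rictil0 (Some i) None (Some l) p
      - nabla_Rictil0 (Some l) None (Some i) p
    = dtil None (Ric g i l) p + 2 * (\<Sum>m\<in>UNIV. Ric_up g i m p * Ric g m l p)"
  unfolding nabla_Rictil0_0ss[OF p] nabla_Rictil0_s0s[OF p] dtil_commute[OF smooth_scal p, of "Some i"]
  using christoffel_sym[OF p, of i l] Ric_sym[OF p, of i]
  by (simp add: algebra_simps)

lemma nabla_Rictil0_koszul_s0: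
  assumes p: "p \<in> \<Omega>"
  shows "nabla_Rictil0 (Some i) None (Some l) p + nabla_Rictil0 None (Some i) (Some l) p
      - nabla_Rictil0 (Some l) (Some i) None p
    = dtil None (Ric g i l) p + 2 * (\<Sum>m\<in>UNIV. Ric_up g i m p * Ric g m l p)"
  unfolding nabla_Rictil0_0ss[OF p] nabla_Rictil0_s0s[OF p] nabla_Rictil0_ss0[OF p]
    dtil_commute[OF smooth_scal p, of "Some i"]
  using christoffel_sym[OF p, of i l]
  by (simp add: algebra_simps)

lemma dt_Gtil0_00:
  assumes p: "p \<in> \<Omega>"
  shows "dt (Gtil0 None None (Some k)) p = - (\<Sum>l\<in>UNIV. G k l p * (nabla_Rictil0 None None (Some l) p
      + nabla_Rictil0 None None (Some l) p - nabla_Rictil0 (Some l) None None p))"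
proof -
  let ?M = "\<lambda>l. \<Sum>m\<in>UNIV. grad_scal g m p * Ric g m l p"
  have "nabla_Rictil0 None None (Some l) p + nabla_Rictil0 None None (Some l) p
      - nabla_Rictil0 (Some l) None None p = 1/2 * dtil None (dtil (Some l) (scal g)) p + ?M l" for l
    unfolding nabla_Rictil0_00s[OF p] nabla_Rictil0_s00[OF p]
      dtil_commute[OF smooth_scal p, of "Some l" None]
    by (simp add: algebra_simps)
  then have rhs: "(\<Sum>l\<in>UNIV. G k l p * (nabla_Rictil0 None None (Some l) p
      + nabla_Rictil0 None None (Some l) p - nabla_Rictil0 (Some l) None None p))
      = 1/2 * (\<Sum>l\<in>UNIV. G k l p * dtil None (dtil (Some l) (scal g)) p) + (\<Sum>l\<in>UNIV. G k l p * ?M l)"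
    by (simp add: distrib_left sum.distrib sum_distrib_left mult_ac)
  have dt_ginv_dscal: "(\<Sum>l\<in>UNIV. dtil None (G k l) p * dscal p l) = 2 * (\<Sum>l\<in>UNIV. G k l p * ?M l)"
    unfolding dt_ginv[OF p] grad_scal_eq Ric_eq_jet
    by (rule ginv_X_ginv_contract) (rule ricci_jet_sym[OF p])
  have "dt (Gtil0 None None (Some k)) p = - (1/2) * ((\<Sum>l\<in>UNIV. dtil None (G k l) p * dscal p l)
      + (\<Sum>l\<in>UNIV. G k l p * dtil None (dtil (Some l) (scal g)) p))"
    unfolding Gtil0_simps dt_eq_dtil
    by (simp add: dtil_minus_half p grad_scal_eq dtil_arith sum.distrib)
  then show ?thesis unfolding rhs dt_ginv_dscal by (simp add: algebra_simps)
qed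

lemma dt_Gtil0: assumes p: "p \<in> \<Omega>"
  shows "dt (Gtil0 a b c) p
      = - (\<Sum>l\<in>UNIV. gtil0 c l p * (nabla_Rictil0 a b l p + nabla_Rictil0 b a l p - nabla_Rictil0 l a b p))"
proof (cases c)
  case None then show ?thesis by (simp add: gtil0_simps Gtil0_simps dt_eq_dtil)
next
  case (Some k)
  have "dt (Gtil0 a b (Some k)) p = - (\<Sum>l\<in>UNIV. G k l p * (nabla_Rictil0 a b (Some l) p
      + nabla_Rictil0 b a (Some l) p - nabla_Rictil0 (Some l) a b p))"
  proof (cases a)
    case a: None
    show ?thesis
    proof (cases b)
      case None
      then show ?thesis using a dt_Gtil0_00[OF p] by simp
    next
      case (Some i)
      show ?thesis
        unfolding a Some Gtil0_simps dt_eq_dtil dt_minus_Ric_up[OF p] nabla_Rictil0_koszul_0s[OF p] ..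
    qed
  next
    case a: (Some i)
    show ?thesis
    proof (cases b)
      case None
      show ?thesis
        unfolding a None Gtil0_simps dt_eq_dtil dt_minus_Ric_up[OF p] nabla_Rictil0_koszul_s0[OF p] ..
    next
      case (Some j)
      show ?thesis
        unfolding a Some Gtil0_simps dt_eq_dtil dt_christoffel[OF p] nabla_Rictil0_sss[OF p] ..
    qed
  qed
  then show ?thesis using Some by (simp add: sum_gtil0_Some)
qed

end

section \<open>Shifting time by \<open>\<tau>\<close>\<close>

definition shifted :: "'a::real_normed_vector \<Rightarrow> ('a \<Rightarrow> real) \<Rightarrow> 'a \<Rightarrow> real" where
  "shifted s f = (\<lambda>q. f (q + s))"

lemma shifted_apply [simp]: "shifted s f p = f (p + s)"
  by (simp add: shifted_def)

lemma dtil_shifted [simp]: "dtil a (shifted s f) p = dtil a f (p + s)"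
  unfolding shifted_def by (rule dtil_shift)

lemma dt_shifted: "dt (shifted s f) p = dt f (p + s)"
  unfolding dt_eq_dtil by (rule dtil_shifted)

lemma ricci_shifted:
  "ricci dtil (\<lambda>a b c. shifted s (F a b c)) j k p = ricci dtil F j k (p + s)"
  unfolding ricci_def curv_def by simp

lemma covd2_shifted:
  "covd2 dtil (\<lambda>a b c. shifted s (F a b c)) (\<lambda>a b. shifted s (R a b)) i j l p
    = covd2 dtil F R i j l (p + s)"
  unfolding covd2_def by simp

lemma gtil_shift: "gtil g \<tau> a b = shifted (0, \<tau>) (gtil g 0 a b)"
  by (rule ext) (simp add: gtil_def split: option.splits)

lemma Gtil_shift: "Gtil g \<tau> = (\<lambda>a b c. shifted (0, \<tau>) (Gtil g 0 a b c))"
  by (intro ext) (simp add: Gtil_def Let_def split: option.splits)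

lemma Rictil_shift: "Rictil g \<tau> = (\<lambda>a b. shifted (0, \<tau>) (Rictil g 0 a b))"
  unfolding Rictil_def Gtil_shift[of g \<tau>] by (intro ext) (simp only: ricci_shifted shifted_apply)

context ricci_flow_chart
begin

lemma dt_gtil:
  assumes "p + (0, \<tau>) \<in> \<Omega>"
  shows "dt (gtil g \<tau> a b) p = 2 * (\<Sum>k\<in>UNIV. \<Sum>l\<in>UNIV. gtil g \<tau> a k p * gtil g \<tau> b l p * Rictil g \<tau> k l p)"
  unfolding gtil_shift[of g \<tau>] Rictil_shift[of g \<tau>] dt_shifted shifted_apply
  using dt_gtil0[OF assms] .

lemma dt_Gtil:
  assumes "p + (0, \<tau>) \<in> \<Omega>"
  shows "dt (Gtil g \<tau> a b c) p = - (\<Sum>l\<in>UNIV. gtil g \<tau> c l p *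
    (covd2 dtil (Gtil g \<tau>) (Rictil g \<tau>) a b l p + covd2 dtil (Gtil g \<tau>) (Rictil g \<tau>) b a l p
     - covd2 dtil (Gtil g \<tau>) (Rictil g \<tau>) l a b p))"
  unfolding gtil_shift[of g \<tau>] Gtil_shift[of g \<tau>] Rictil_shift[of g \<tau>]
    dt_shifted shifted_apply covd2_shifted
  using dt_Gtil0[OF assms] .

end

lemma ricci_flow_chart_if_ricci_flow_on:
  assumes "ricci_flow_on U T g"
  shows "ricci_flow_chart (U \<times> {0<..<T}) g"
  using assms
  unfolding ricci_flow_on_def ricci_flow_chart_def riemannian_chart_def ricci_flow_chart_axioms_def
  by (auto intro: open_Times)

theorem theorem2p1:
  fixes U :: "(real^'n::finite) set" and T \<tau> :: real
    and g :: "'n \<Rightarrow> 'n \<Rightarrow> 'n pt \<Rightarrow> real"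
  assumes "ricci_flow_on U T g"
    and "0 \<le> \<tau>" and "\<tau> < T"
  shows "\<forall>x t. x \<in> U \<longrightarrow> 0 < t \<longrightarrow> t < T - \<tau> \<longrightarrow>
    (\<forall>a b. dt (gtil g \<tau> a b) (x, t) =
        2 * (\<Sum>k\<in>UNIV. \<Sum>l\<in>UNIV. gtil g \<tau> a k (x, t) * gtil g \<tau> b l (x, t) * Rictil g \<tau> k l (x, t)))
    \<and> (\<forall>a b c. dt (Gtil g \<tau> a b c) (x, t) =
        - (\<Sum>l\<in>UNIV. gtil g \<tau> c l (x, t) *
            (covd2 dtil (Gtil g \<tau>) (Rictil g \<tau>) a b l (x, t)
             + covd2 dtil (Gtil g \<tau>) (Rictil g \<tau>) b a l (x, t)
             - covd2 dtil (Gtil g \<tau>) (Rictil g \<tau>) l a b (x, t))))"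
proof -
  interpret ricci_flow_chart "U \<times> {0<..<T}" g
    using assms(1) by (rule ricci_flow_chart_if_ricci_flow_on)
  have "(x, t) + (0, \<tau>) \<in> U \<times> {0<..<T}" if "x \<in> U" "0 < t" "t < T - \<tau>" for x t
    using that assms(2) by auto
  then show ?thesis using dt_gtil dt_Gtil by blast
qed

end
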